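(* Let $n_T,n_R$ be positive integers, $m=\min\{n_T,n_R\}$, let $\Phi_T,\Phi_R$ be Hermitian positive definite of sizes $n_T,n_R$, $H=\Phi_R^{1/2}H_0\Phi_T^{1/2}$ with $H_0\in\mathbb{C}^{n_R\times n_T}$ having i.i.d. zero-mean unit-variance circularly symmetric complex Gaussian entries, and $\Theta=HH^\dagger$ if $n_R\le n_T$, $\Theta=H^\dagger H$ otherwise. Fix $\gamma>0$ and a positive integer $N_c$, and for $\rho\in[0,1]$, $\beta\in(0,n_T]$ let $$\tilde E_0(\rho,\beta,N_c)=(1+\rho)(n_T-\beta)+n_T(1+\rho)\ln(\beta/n_T)-\frac1{N_c}\ln\mathbb{E}\Big\{\det\Big(I_m+\frac{\gamma\Theta}{\beta(1+\rho)}\Big)^{-N_c\rho}\Big\}.$$ For each $\rho\in[0,1]$, let $\beta^*(\rho)$ be the value of $\beta\in[0,n_T]$ maximizing $\tilde E_0(\rho,\beta,N_c)$. Then $\beta^*(\rho)$ is a solution of $\partial\tilde E_0(\rho,\beta,N_c)/\partial\beta=0$ and $0<\beta^*(\rho)\le n_T$. *)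

theory Defs
  imports "HOL-Probability.Probability" "Jordan_Normal_Form.Matrix" "Jordan_Normal_Form.Determinant"
begin

definition cadj :: "complex mat \<Rightarrow> complex mat" where
  "cadj A = mat (dim_col A) (dim_row A) (\<lambda>(i,j). cnj (A $$ (j,i)))"

definition hermitian_mat :: "nat \<Rightarrow> complex mat \<Rightarrow> bool" where
  "hermitian_mat n A \<longleftrightarrow> A \<in> carrier_mat n n \<and> cadj A = A"

definition hpd_mat :: "nat \<Rightarrow> complex mat \<Rightarrow> bool" where
  "hpd_mat n A \<longleftrightarrow> hermitian_mat n A \<and>
     (\<forall>v \<in> carrier_vec n. v \<noteq> 0\<^sub>v n \<longrightarrow>
        (let q = (\<Sum>i<n. cnj (v $ i) * (A *\<^sub>v v) $ i) in Im q = 0 \<and> Re q > 0))"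

definition hpd_sqrt :: "nat \<Rightarrow> complex mat \<Rightarrow> complex mat" where
  "hpd_sqrt n A = (THE S. hpd_mat n S \<and> S * S = A)"

(* circularly symmetric complex Gaussian, zero mean, unit variance E|z|^2 = 1:
   density exp(-|z|^2)/pi w.r.t. Lebesgue measure on C = R^2 *)
definition cgauss :: "complex measure" where
  "cgauss = density lborel (\<lambda>z. ennreal (exp (- (cmod z * cmod z)) / pi))"

definition H0_space :: "nat \<Rightarrow> nat \<Rightarrow> (nat \<times> nat \<Rightarrow> complex) measure" where
  "H0_space nR nT = PiM ({..<nR} \<times> {..<nT}) (\<lambda>_. cgauss)"

definition H0_of :: "nat \<Rightarrow> nat \<Rightarrow> (nat \<times> nat \<Rightarrow> complex) \<Rightarrow> complex mat" where
  "H0_of nR nT \<omega> = mat nR nT (\<lambda>ij. \<omega> ij)"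

definition H_of :: "nat \<Rightarrow> nat \<Rightarrow> complex mat \<Rightarrow> complex mat \<Rightarrow> (nat \<times> nat \<Rightarrow> complex) \<Rightarrow> complex mat" where
  "H_of nT nR PhiT PhiR \<omega> = hpd_sqrt nR PhiR * H0_of nR nT \<omega> * hpd_sqrt nT PhiT"

definition Theta_of :: "nat \<Rightarrow> nat \<Rightarrow> complex mat \<Rightarrow> complex mat \<Rightarrow> (nat \<times> nat \<Rightarrow> complex) \<Rightarrow> complex mat" where
  "Theta_of nT nR PhiT PhiR \<omega> =
     (let H = H_of nT nR PhiT PhiR \<omega> in if nR \<le> nT then H * cadj H else cadj H * H)"

definition E0t :: "nat \<Rightarrow> nat \<Rightarrow> complex mat \<Rightarrow> complex mat \<Rightarrow> real \<Rightarrow> nat \<Rightarrow> real \<Rightarrow> real \<Rightarrow> real" where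
  "E0t nT nR PhiT PhiR \<gamma> Nc \<rho> \<beta> =
     (1 + \<rho>) * (real nT - \<beta>) + real nT * (1 + \<rho>) * ln (\<beta> / real nT)
     - (1 / real Nc) * ln (\<integral>\<omega>. (Re (det (1\<^sub>m (min nT nR) +
            complex_of_real (\<gamma> / (\<beta> * (1 + \<rho>))) \<cdot>\<^sub>m Theta_of nT nR PhiT PhiR \<omega>)))
            powr (- real Nc * \<rho>) \<partial>H0_space nR nT)"

end

theory Submission
  imports Defs "Jordan_Normal_Form.Char_Poly"
begin

(* Diagonalising Theta = G G^H by a unitary matrix turns the integrand of E0t into
   (prod j<m. 1 + c l_j / beta) powr (-a) with eigenvalues l_j >= 0, a = Nc rho and c = gamma / (1 + rho).
   Each such weight lies in (0,1], is nondecreasing in beta and has derivative at most a m / beta, so by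
   dominated convergence its expectation F is positive and differentiable with F' >= 0; bounding the l_j
   by the entries of Theta also gives F beta >= K beta^(a m) for beta <= 1, with K > 0. As
   nT (1 + rho) > rho m, the function (1 + rho) (nT - beta) + nT (1 + rho) ln (beta / nT) - ln (F beta) / Nc
   tends to -infinity as beta -> 0 and therefore attains its maximum on (0, nT]. At an interior maximiser
   its derivative vanishes; at beta = nT the derivative is -F' / (Nc F) <= 0, while maximality from the left
   forces it to be >= 0. The square roots in the definition of H are well defined because a positive
   definite matrix has a unique positive definite square root, which follows from the spectral theorem. *)

lemma mult_mat_index_sum:
  assumes "A \<in> carrier_mat r k" "B \<in> carrier_mat k c" "i < r" "j < c"
  shows "(A * B) $$ (i,j) = (\<Sum>l\<in>{0..<k}. A $$ (i,l) * B $$ (l,j))"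
  using assms by (auto simp: scalar_prod_def intro!: sum.cong)

lemma cadj_dims [simp]: "dim_row (cadj A) = dim_col A" "dim_col (cadj A) = dim_row A"
  by (simp_all add: cadj_def)

lemma index_cadj [simp]: "i < dim_col A \<Longrightarrow> j < dim_row A \<Longrightarrow> cadj A $$ (i,j) = cnj (A $$ (j,i))"
  by (simp add: cadj_def)

lemma cadj_carrier [simp]: "A \<in> carrier_mat r c \<Longrightarrow> cadj A \<in> carrier_mat c r"
  unfolding cadj_def carrier_mat_def by simp

lemma cadj_cadj [simp]: "cadj (cadj A) = A"
  by (rule eq_matI) simp_all

lemma cadj_one [simp]: "cadj (1\<^sub>m n) = 1\<^sub>m n"
  by (rule eq_matI) simp_all

lemma cadj_mult:
  assumes "A \<in> carrier_mat r k" "B \<in> carrier_mat k c"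
  shows "cadj (A * B) = cadj B * cadj A"
proof (rule eq_matI)
  fix i j assume "i < dim_row (cadj B * cadj A)" "j < dim_col (cadj B * cadj A)"
  then have i: "i < c" and j: "j < r" using assms by auto
  have "cadj (A * B) $$ (i,j) = cnj (\<Sum>l\<in>{0..<k}. A $$ (j,l) * B $$ (l,i))"
    using assms i j mult_mat_index_sum[OF assms j i] by simp
  also have "\<dots> = (\<Sum>l\<in>{0..<k}. cadj B $$ (i,l) * cadj A $$ (l,j))"
    using assms i j by (auto simp: mult.commute intro!: sum.cong)
  also have "\<dots> = (cadj B * cadj A) $$ (i,j)"
    using mult_mat_index_sum[of "cadj B" c k "cadj A" r i j] assms i j by simp
  finally show "cadj (A * B) $$ (i,j) = (cadj B * cadj A) $$ (i,j)" .
qed (use assms in simp_all)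

lemma cadj_minus:
  assumes "A \<in> carrier_mat r c" "B \<in> carrier_mat r c"
  shows "cadj (A - B) = cadj A - cadj B"
  by (rule eq_matI) (use assms in auto)

lemma hermitian_mat_carrier: "hermitian_mat n A \<Longrightarrow> A \<in> carrier_mat n n"
  unfolding hermitian_mat_def by simp

lemma hermitian_mat_index:
  assumes "hermitian_mat n A" "i < n" "j < n"
  shows "A $$ (i,j) = cnj (A $$ (j,i))"
  using assms index_cadj[of i A j] unfolding hermitian_mat_def by auto

definition cinner :: "nat \<Rightarrow> complex vec \<Rightarrow> complex vec \<Rightarrow> complex" where
  "cinner n x y = (\<Sum>i<n. cnj (x $ i) * y $ i)"

lemma cnj_mult_self: "cnj z * z = complex_of_real ((cmod z)\<^sup>2)"
  by (simp add: mult.commute complex_mult_cnj cmod_power2)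

lemma cinner_self: "cinner n x x = complex_of_real (\<Sum>i<n. (cmod (x $ i))\<^sup>2)"
  unfolding cinner_def by (simp add: cnj_mult_self)

lemma cinner_mult_mat_vec:
  assumes A: "A \<in> carrier_mat r c" and x: "x \<in> carrier_vec r" and y: "y \<in> carrier_vec c"
  shows "cinner r x (A *\<^sub>v y) = cinner c (cadj A *\<^sub>v x) y"
proof -
  have "cinner r x (A *\<^sub>v y) = (\<Sum>i<r. \<Sum>j<c. cnj (x $ i) * A $$ (i,j) * y $ j)"
    unfolding cinner_def using A x y
    by (intro sum.cong refl) (auto simp: scalar_prod_def sum_distrib_left mult.assoc atLeast0LessThan)
  also have "\<dots> = (\<Sum>j<c. \<Sum>i<r. cnj (x $ i) * A $$ (i,j) * y $ j)" by (rule sum.swap)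
  also have "\<dots> = cinner c (cadj A *\<^sub>v x) y"
    unfolding cinner_def using A x y
    by (intro sum.cong refl)
      (auto simp: scalar_prod_def sum_distrib_right sum_distrib_left cnj_sum mult.commute mult.left_commute
        atLeast0LessThan)
  finally show ?thesis .
qed

lemma cinner_hermitian:
  assumes "hermitian_mat n A" "x \<in> carrier_vec n" "y \<in> carrier_vec n"
  shows "cinner n x (A *\<^sub>v y) = cinner n (A *\<^sub>v x) y"
  using cinner_mult_mat_vec[of A n n x y] assms unfolding hermitian_mat_def by simp

lemma hpd_mat_hermitian: "hpd_mat n A \<Longrightarrow> hermitian_mat n A"
  unfolding hpd_mat_def by simp

lemma hpd_mat_cinner:
  assumes "hpd_mat n A" "v \<in> carrier_vec n" "v \<noteq> 0\<^sub>v n"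
  shows "Im (cinner n v (A *\<^sub>v v)) = 0" "Re (cinner n v (A *\<^sub>v v)) > 0"
  using assms unfolding hpd_mat_def cinner_def Let_def by blast+

lemma cadj_mult_mult_index:
  assumes "U \<in> carrier_mat n n" "A \<in> carrier_mat n n" "i < n" "j < n"
  shows "(cadj U * A * U) $$ (i,j) = cinner n (col U i) (A *\<^sub>v col U j)"
proof -
  have "cadj U * A * U = cadj U * (A * U)" using assms by (intro assoc_mult_mat) auto
  then show ?thesis
    using assms mult_mat_index_sum[of "cadj U" n n "A * U" n i j]
    by (auto simp: cinner_def atLeast0LessThan intro!: sum.cong)
qed

definition unitary :: "nat \<Rightarrow> complex mat \<Rightarrow> bool" where
  "unitary n U \<longleftrightarrow> U \<in> carrier_mat n n \<and> cadj U * U = 1\<^sub>m n"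

lemma unitary_carrier: "unitary n U \<Longrightarrow> U \<in> carrier_mat n n"
  unfolding unitary_def by simp

lemma unitary_one: "unitary n (1\<^sub>m n)"
  unfolding unitary_def by simp

lemma unitary_mult_cadj:
  assumes "unitary n U" shows "U * cadj U = 1\<^sub>m n"
  using assms mat_mult_left_right_inverse[of "cadj U" n U] unfolding unitary_def by auto

lemma unitary_mult:
  assumes U: "unitary n U" and V: "unitary n V" shows "unitary n (U * V)"
proof -
  have Uc: "U \<in> carrier_mat n n" and Vc: "V \<in> carrier_mat n n" using U V unitary_carrier by auto
  have "cadj (U * V) * (U * V) = cadj V * ((cadj U * U) * V)"
    using Uc Vc by (simp add: cadj_mult assoc_mult_mat[of _ n n _ n _ n] mult_carrier_mat[of _ n n])
  then show ?thesis using U V Uc Vc unfolding unitary_def by simp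
qed

lemma cinner_unitary_cols:
  assumes "unitary n U" "i < n" "j < n"
  shows "cinner n (col U i) (col U j) = (if i = j then 1 else 0)"
  using cadj_mult_mult_index[of U n "1\<^sub>m n" i j] assms unitary_carrier[OF assms(1)]
  unfolding unitary_def by simp

lemma unitary_col_nonzero:
  assumes "unitary n U" "j < n"
  shows "col U j \<noteq> 0\<^sub>v n"
  using cinner_unitary_cols[OF assms assms(2)] by (auto simp: cinner_def)

lemma unitary_conj_hermitian:
  assumes U: "unitary n U" and A: "hermitian_mat n A"
  shows "hermitian_mat n (cadj U * A * U)"
proof -
  have Uc: "U \<in> carrier_mat n n" and Ac: "A \<in> carrier_mat n n" and AA: "cadj A = A"
    using U A unitary_carrier unfolding hermitian_mat_def by auto
  have "cadj (cadj U * A * U) = cadj U * A * U"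
    using Uc Ac AA
      by (simp add: cadj_mult[of _ n n _ n] assoc_mult_mat[of _ n n _ n _ n] mult_carrier_mat[of _ n n])
  moreover have "cadj U * A * U \<in> carrier_mat n n" using Uc Ac by (meson cadj_carrier mult_carrier_mat)
  ultimately show ?thesis unfolding hermitian_mat_def by simp
qed

lemma unitary_conj_inverse:
  assumes U: "unitary n U" and A: "A \<in> carrier_mat n n"
  shows "U * (cadj U * A * U) * cadj U = A"
proof -
  have Uc: "U \<in> carrier_mat n n" and cU: "cadj U \<in> carrier_mat n n" using U unitary_carrier by auto
  have "U * (cadj U * A * U) = (U * cadj U) * A * U"
    using Uc cU A by (simp add: assoc_mult_mat[of _ n n _ n _ n] mult_carrier_mat[of _ n n])
  also have "\<dots> = A * U" using unitary_mult_cadj[OF U] A by simp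
  finally have "U * (cadj U * A * U) * cadj U = A * (U * cadj U)"
    using Uc cU A by (simp add: assoc_mult_mat[of _ n n _ n _ n] mult_carrier_mat[of _ n n])
  then show ?thesis using unitary_mult_cadj[OF U] A by simp
qed

lemma det_unitary_conj:
  assumes U: "unitary n U" and X: "X \<in> carrier_mat n n"
  shows "det (U * X * cadj U) = det X"
proof -
  have Uc: "U \<in> carrier_mat n n" using U unitary_carrier by auto
  have "det (U * X * cadj U) = det X * (det (cadj U) * det U)"
    using Uc X by (simp add: det_mult[of _ n])
  also have "det (cadj U) * det U = 1"
    using det_mult[of "cadj U" n U] U Uc unfolding unitary_def by simp
  finally show ?thesis by simp
qed

lemma det_diagonal_mat:
  assumes "A \<in> carrier_mat n n" "diagonal_mat A"
  shows "det A = (\<Prod>j<n. A $$ (j,j))"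
proof -
  have "upper_triangular A" using assms unfolding diagonal_mat_def upper_triangular_def by auto
  then show ?thesis
    using det_upper_triangular[of A n] prod_list_diag_prod[of A] assms by (simp add: atLeast0LessThan)
qed

section \<open>The spectral theorem for Hermitian matrices\<close>

lemma unitary_reflection:
  fixes w :: "nat \<Rightarrow> complex"
  assumes W: "W = (\<Sum>l<n. (cmod (w l))\<^sup>2)" "W > 0"
  shows "unitary n (mat n n (\<lambda>(i,j). (if i = j then 1 else 0) - complex_of_real (2 / W) * w i * cnj (w j)))"
    (is "unitary n ?V")
proof -
  define c where "c = complex_of_real (2 / W)"
  define V where "V = ?V"
  have Vc: "V \<in> carrier_mat n n" unfolding V_def by simp
  have V: "V $$ (i,j) = (if i = j then 1 else 0) - c * w i * cnj (w j)" if "i < n" "j < n" for i j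
    using that unfolding V_def c_def by simp
  have adj: "cadj V = V"
    by (rule eq_matI) (use Vc in \<open>auto simp: V c_def mult.commute mult.left_commute\<close>)
  have wsum: "(\<Sum>l\<in>{0..<n}. cnj (w l) * w l) = complex_of_real W"
    unfolding W atLeast0LessThan by (simp add: cnj_mult_self)
  have cW: "c * c * complex_of_real W = 2 * c"
    unfolding c_def using W(2) by (simp add: field_simps)
  have "V * V = 1\<^sub>m n"
  proof (rule eq_matI)
    fix i j assume "i < dim_row (1\<^sub>m n :: complex mat)" "j < dim_col (1\<^sub>m n :: complex mat)"
    then have i: "i < n" and j: "j < n" by auto
    have "(V * V) $$ (i,j) = (\<Sum>l\<in>{0..<n}. V $$ (i,l) * V $$ (l,j))"
      by (rule mult_mat_index_sum[OF Vc Vc i j])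
    also have "\<dots> = (\<Sum>l\<in>{0..<n}. (if i = l then 1 else 0) * (if l = j then 1 else 0)
        - (if l = j then 1 else 0) * (c * w i * cnj (w l))
        - (if i = l then 1 else 0) * (c * w l * cnj (w j))
        + (c * c * w i * cnj (w j)) * (cnj (w l) * w l))"
      using i j by (intro sum.cong) (simp_all add: V algebra_simps)
    also have "\<dots> = (\<Sum>l\<in>{0..<n}. (if i = l then 1 else 0) * (if l = j then 1 else 0))
        - (\<Sum>l\<in>{0..<n}. (if l = j then 1 else 0) * (c * w i * cnj (w l)))
        - (\<Sum>l\<in>{0..<n}. (if i = l then 1 else 0) * (c * w l * cnj (w j)))
        + (c * c * w i * cnj (w j)) * (\<Sum>l\<in>{0..<n}. cnj (w l) * w l)"
      by (simp add: sum.distrib sum_subtractf sum_distrib_left)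
    also have "\<dots> = (if i = j then 1 else 0) - 2 * (c * w i * cnj (w j))
        + (c * c * complex_of_real W) * (w i * cnj (w j))"
      using i j by (simp only: mult_if_delta wsum sum.delta sum.delta' finite_atLeastLessThan)
        (simp add: algebra_simps)
    also have "\<dots> = 1\<^sub>m n $$ (i,j)" unfolding cW using i j by (simp add: algebra_simps)
    finally show "(V * V) $$ (i,j) = 1\<^sub>m n $$ (i,j)" .
  qed (use Vc in auto)
  then have "unitary n V" unfolding unitary_def using Vc adj by simp
  then show ?thesis unfolding V_def .
qed

lemma householder_unit_vector:
  fixes f :: "nat \<Rightarrow> complex"
  assumes kn: "k < n" and f0: "\<forall>i<k. f i = 0" and f_unit: "(\<Sum>i<n. (cmod (f i))\<^sup>2) = 1"
    and fk: "f k = complex_of_real r"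
  shows "\<exists>V. unitary n V \<and> (\<forall>i<n. \<forall>j<k. V $$ (i,j) = (if i = j then 1 else 0))
            \<and> (\<forall>i<n. V $$ (i,k) = f i)"
proof -
  define e where "e i = (if i = k then 1 else 0 :: complex)" for i
  show ?thesis
  proof (cases "\<forall>i<n. f i = e i")
    case True
    then show ?thesis using kn unitary_one by (intro exI[of _ "1\<^sub>m n"]) (auto simp: e_def)
  next
    case False
    define w where "w i = e i - f i" for i
    define W where "W = (\<Sum>i<n. (cmod (w i))\<^sup>2)"
    have W_pos: "W > 0" unfolding W_def using False by (auto simp: w_def intro: sum_pos2)
    have wk: "w k = complex_of_real (1 - r)" using fk by (simp add: w_def e_def)
    have "(cmod (w i))\<^sup>2 = (cmod (f i))\<^sup>2 + (if i = k then 1 - 2 * r else 0)" for i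
    proof (cases "i = k")
      case True
      from wk have "(cmod (w k))\<^sup>2 = (1 - r)\<^sup>2" by (simp only: norm_of_real power2_abs)
      then show ?thesis using fk True by (simp add: power2_eq_square algebra_simps)
    qed (simp add: w_def e_def)
    then have "W = 2 - 2 * r" using kn f_unit by (simp add: W_def sum.distrib)
    then have "2 / W * (1 - r) = 1" using W_pos by (simp add: field_simps)
    then have cw: "complex_of_real (2 / W) * cnj (w k) = 1"
      unfolding wk by (metis complex_cnj_complex_of_real of_real_1 of_real_mult)
    define V where
      "V = mat n n (\<lambda>(i,j). (if i = j then 1 else 0) - complex_of_real (2 / W) * w i * cnj (w j))"
    have "V $$ (i,j) = (if i = j then 1 else 0)" if "i < n" "j < k" for i j
      using that kn f0 by (simp add: V_def w_def e_def)
    moreover have "V $$ (i,k) = f i" if "i < n" for i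
    proof -
      have "V $$ (i,k) = e i - w i * (complex_of_real (2 / W) * cnj (w k))"
        using that kn by (simp add: V_def e_def mult.assoc)
      then show ?thesis unfolding cw by (simp add: w_def)
    qed
    ultimately show ?thesis using unitary_reflection[OF W_def W_pos, folded V_def] by blast
  qed
qed

lemma householder:
  fixes y :: "nat \<Rightarrow> complex"
  assumes kn: "k < n" and y0: "\<forall>i<k. y i = 0" and ynz: "\<exists>i<n. y i \<noteq> 0"
  shows "\<exists>V \<alpha>. unitary n V \<and> (\<forall>i<n. \<forall>j<k. V $$ (i,j) = (if i = j then 1 else 0))
            \<and> (\<forall>i<n. V $$ (i,k) = \<alpha> * y i)"
proof -
  define N where "N = (\<Sum>i<n. (cmod (y i))\<^sup>2)"
  have N: "N > 0" unfolding N_def using ynz by (auto intro: sum_pos2)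
  define \<theta> where "\<theta> = (if y k = 0 then 1 else cnj (y k) / cmod (y k))"
  define \<alpha> where "\<alpha> = \<theta> / sqrt N"
  have \<theta>: "cmod \<theta> = 1" "\<theta> * y k = cmod (y k)"
    using cnj_mult_self[of "y k"] unfolding \<theta>_def by (auto simp: norm_divide power2_eq_square)
  have fk: "\<alpha> * y k = complex_of_real (cmod (y k) / sqrt N)"
    unfolding \<alpha>_def using \<theta>(2) by (simp add: field_simps)
  have f_unit: "(\<Sum>i<n. (cmod (\<alpha> * y i))\<^sup>2) = 1"
    using N \<theta>(1) by (simp add: \<alpha>_def norm_mult norm_divide power_divide
        sum_divide_distrib[symmetric] N_def[symmetric])
  have "\<forall>i<k. \<alpha> * y i = 0" using y0 by simp
  then show ?thesis using householder_unit_vector[OF kn _ f_unit fk] by blast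
qed

lemma complex_mat_eigenvector:
  fixes A :: "complex mat"
  assumes A: "A \<in> carrier_mat n n" and n: "n > 0"
  obtains \<mu> v where "v \<in> carrier_vec n" "v \<noteq> 0\<^sub>v n" "A *\<^sub>v v = \<mu> \<cdot>\<^sub>v v"
proof -
  obtain as where cp: "char_poly A = (\<Prod>a\<leftarrow>as. [:- a, 1:])" and len: "length as = n"
    using char_poly_factorized[OF A] by blast
  obtain a rest where "as = a # rest" using len n by (cases as) auto
  then have "poly (char_poly A) a = 0" unfolding cp by simp
  then have "eigenvalue A a" using eigenvalue_root_char_poly[OF A] by simp
  then show ?thesis using that A unfolding eigenvalue_def eigenvector_def by auto
qed

lemma unitary_conj_eigencolumn:
  assumes U: "unitary n U" and B: "B \<in> carrier_mat n n" and ij: "i < n" "j < n" "i \<noteq> j"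
    and eigen: "\<forall>p<n. (B * U) $$ (p,j) = \<mu> * U $$ (p,j)"
  shows "(cadj U * B * U) $$ (i,j) = 0"
proof -
  have Uc: "U \<in> carrier_mat n n" and cU: "cadj U \<in> carrier_mat n n" using U unitary_carrier by auto
  have "(cadj U * B * U) $$ (i,j) = (cadj U * (B * U)) $$ (i,j)"
    using Uc cU B by (simp add: assoc_mult_mat[of _ n n _ n _ n])
  also have "\<dots> = (\<Sum>p\<in>{0..<n}. cadj U $$ (i,p) * (B * U) $$ (p,j))"
    using Uc cU B ij by (intro mult_mat_index_sum) auto
  also have "\<dots> = \<mu> * (\<Sum>p\<in>{0..<n}. cadj U $$ (i,p) * U $$ (p,j))"
    using eigen by (simp add: sum_distrib_left mult.left_commute)
  also have "\<dots> = \<mu> * (cadj U * U) $$ (i,j)"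
    using mult_mat_index_sum[of "cadj U" n n U n i j] Uc ij by simp
  finally show ?thesis using U ij unfolding unitary_def by simp
qed

lemma hermitian_padded_eigenvector:
  fixes v :: "complex vec"
  assumes B: "hermitian_mat n B" and kn: "k < n"
    and diag: "\<forall>i<n. \<forall>j<k. i \<noteq> j \<longrightarrow> B $$ (i,j) = 0"
    and v: "v \<in> carrier_vec (n-k)" "mat (n-k) (n-k) (\<lambda>(i,j). B $$ (i+k, j+k)) *\<^sub>v v = \<mu> \<cdot>\<^sub>v v"
    and p: "p < n"
  defines "y \<equiv> \<lambda>i. if i < k then 0 else v $ (i-k)"
  shows "(\<Sum>q\<in>{0..<n}. B $$ (p,q) * y q) = \<mu> * y p"
proof -
  have "{0..<n} = {0..<k} \<union> {k..<n}" using kn by auto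
  then have "(\<Sum>q\<in>{0..<n}. B $$ (p,q) * y q) = (\<Sum>q\<in>{k..<n}. B $$ (p,q) * y q)"
    by (simp add: sum.union_disjoint y_def)
  also have "\<dots> = (\<Sum>l\<in>{0..<n-k}. B $$ (p,l+k) * v $ l)"
    by (rule sum.reindex_bij_witness[of _ "\<lambda>l. l + k" "\<lambda>q. q - k"]) (auto simp: y_def)
  also have "\<dots> = \<mu> * y p"
  proof (cases "p < k")
    case True
    then have "B $$ (p,l+k) = 0" if "l < n-k" for l
      using hermitian_mat_index[OF B p, of "l+k"] diag that by auto
    then show ?thesis using True by (simp add: y_def)
  next
    case False
    have "(mat (n-k) (n-k) (\<lambda>(i,j). B $$ (i+k, j+k)) *\<^sub>v v) $ (p-k) = (\<Sum>l\<in>{0..<n-k}. B $$ (p,l+k) * v $ l)"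
      using v(1) p False by (auto simp: scalar_prod_def intro!: sum.cong)
    then show ?thesis using v p False by (simp add: y_def)
  qed
  finally show ?thesis .
qed

text \<open>Induction step: an eigenvector of the lower right block, padded with zeros, is an eigenvector
  of \<open>B\<close>, and a Householder reflection puts it into column \<open>k\<close> without disturbing the first \<open>k\<close>
  columns, which are already eigenvectors.\<close>

lemma hermitian_diagonalize_step:
  assumes B: "hermitian_mat n B" and kn: "k < n"
    and diag: "\<forall>i<n. \<forall>j<k. i \<noteq> j \<longrightarrow> B $$ (i,j) = 0"
  shows "\<exists>V. unitary n V \<and> (\<forall>i<n. \<forall>j\<le>k. i \<noteq> j \<longrightarrow> (cadj V * B * V) $$ (i,j) = 0)"
proof -
  have Bc: "B \<in> carrier_mat n n" using B hermitian_mat_carrier by auto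
  have "mat (n-k) (n-k) (\<lambda>(i,j). B $$ (i+k, j+k)) \<in> carrier_mat (n-k) (n-k)" "n - k > 0" using kn by auto
  then obtain \<mu> v where v: "v \<in> carrier_vec (n-k)" "v \<noteq> 0\<^sub>v (n-k)"
    "mat (n-k) (n-k) (\<lambda>(i,j). B $$ (i+k, j+k)) *\<^sub>v v = \<mu> \<cdot>\<^sub>v v"
    by (rule complex_mat_eigenvector)
  define y where "y i = (if i < k then 0 else v $ (i-k))" for i
  have ynz: "\<exists>i<n. y i \<noteq> 0"
  proof -
    obtain i where "i < n-k" "v $ i \<noteq> 0" using v(1,2) by (metis carrier_vecD eq_vecI index_zero_vec)
    then show ?thesis by (intro exI[of _ "i+k"]) (auto simp: y_def)
  qed
  obtain V \<alpha> where V: "unitary n V" and Vj: "\<forall>i<n. \<forall>j<k. V $$ (i,j) = (if i = j then 1 else 0)"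
    and Vk: "\<forall>i<n. V $$ (i,k) = \<alpha> * y i"
    using householder[OF kn _ ynz] y_def by auto
  have Vc: "V \<in> carrier_mat n n" using V unitary_carrier by auto
  have "\<forall>p<n. (B * V) $$ (p,j) = (if j < k then B $$ (j,j) else \<mu>) * V $$ (p,j)"
    if j: "j \<le> k" for j
  proof (intro allI impI)
    fix p assume p: "p < n"
    have jn: "j < n" using j kn by auto
    show "(B * V) $$ (p,j) = (if j < k then B $$ (j,j) else \<mu>) * V $$ (p,j)"
    proof (cases "j < k")
      case True
      have "(B * V) $$ (p,j) = (\<Sum>q\<in>{0..<n}. B $$ (p,q) * (if q = j then 1 else 0))"
        unfolding mult_mat_index_sum[OF Bc Vc p jn] using Vj True by (intro sum.cong) auto
      also have "\<dots> = B $$ (p,j)" using jn by (simp add: of_bool_def[symmetric])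
      finally show ?thesis using True diag p Vj by (cases "p = j") auto
    next
      case False
      then have "j = k" using j by simp
      then have "(B * V) $$ (p,j) = \<alpha> * (\<Sum>q\<in>{0..<n}. B $$ (p,q) * y q)"
        unfolding mult_mat_index_sum[OF Bc Vc p jn] using Vk
        by (simp add: sum_distrib_left mult.left_commute)
      then show ?thesis
        using hermitian_padded_eigenvector[OF B kn diag v(1,3) p, folded y_def] Vk p False \<open>j = k\<close>
        by simp
    qed
  qed
  then show ?thesis
    using unitary_conj_eigencolumn[OF V Bc] V kn by (meson le_less_trans)
qed

lemma hermitian_diagonalize_columns:
  assumes A: "hermitian_mat n A" and kn: "k \<le> n"
  shows "\<exists>U. unitary n U \<and> (\<forall>i<n. \<forall>j<k. i \<noteq> j \<longrightarrow> (cadj U * A * U) $$ (i,j) = 0)"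
  using kn
proof (induction k)
  case 0
  then show ?case using unitary_one by blast
next
  case (Suc k)
  then obtain U where U: "unitary n U" and D: "\<forall>i<n. \<forall>j<k. i \<noteq> j \<longrightarrow> (cadj U * A * U) $$ (i,j) = 0"
    by auto
  obtain V where V: "unitary n V"
    and DV: "\<forall>i<n. \<forall>j\<le>k. i \<noteq> j \<longrightarrow> (cadj V * (cadj U * A * U) * V) $$ (i,j) = 0"
    using hermitian_diagonalize_step[OF unitary_conj_hermitian[OF U A] _ D] Suc.prems by auto
  have Uc: "U \<in> carrier_mat n n" and Vc: "V \<in> carrier_mat n n" and Ac: "A \<in> carrier_mat n n"
    using U V A unitary_carrier hermitian_mat_carrier by auto
  have "cadj (U * V) * A * (U * V) = cadj V * (cadj U * A * U) * V"
    using Uc Vc Ac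
      by (simp add: cadj_mult[of _ n n _ n] assoc_mult_mat[of _ n n _ n _ n] mult_carrier_mat[of _ n n])
  then show ?case using unitary_mult[OF U V] DV less_Suc_eq_le by metis
qed

theorem hermitian_unitary_diagonalizable:
  assumes "hermitian_mat n A"
  obtains U where "unitary n U" "diagonal_mat (cadj U * A * U)"
proof -
  obtain U where "unitary n U" "\<forall>i<n. \<forall>j<n. i \<noteq> j \<longrightarrow> (cadj U * A * U) $$ (i,j) = 0"
    using hermitian_diagonalize_columns[OF assms order_refl] by blast
  moreover have "cadj U * A * U \<in> carrier_mat n n"
    using assms calculation(1) unitary_carrier hermitian_mat_carrier
      by (meson cadj_carrier mult_carrier_mat)
  ultimately show ?thesis using that unfolding diagonal_mat_def by auto
qed

section \<open>Square roots of positive definite matrices\<close>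

definition diag_real_mat :: "nat \<Rightarrow> (nat \<Rightarrow> real) \<Rightarrow> complex mat" where
  "diag_real_mat n \<sigma> = mat n n (\<lambda>(i,j). if i = j then complex_of_real (\<sigma> i) else 0)"

lemma diag_real_mat_carrier [simp]: "diag_real_mat n \<sigma> \<in> carrier_mat n n"
  unfolding diag_real_mat_def by simp

lemma diag_real_mat_mult_vec:
  assumes "x \<in> carrier_vec n" "i < n"
  shows "(diag_real_mat n \<sigma> *\<^sub>v x) $ i = complex_of_real (\<sigma> i) * x $ i"
proof -
  have "(diag_real_mat n \<sigma> *\<^sub>v x) $ i = (\<Sum>l\<in>{0..<n}. diag_real_mat n \<sigma> $$ (i,l) * x $ l)"
    using assms carrier_matD[OF diag_real_mat_carrier] by (simp add: scalar_prod_def)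
  also have "\<dots> = (\<Sum>l\<in>{0..<n}. if l = i then complex_of_real (\<sigma> i) * x $ i else 0)"
    using assms by (intro sum.cong) (auto simp: diag_real_mat_def)
  finally show ?thesis using assms by simp
qed

lemma diag_real_mat_mult: "diag_real_mat n \<sigma> * diag_real_mat n \<tau> = diag_real_mat n (\<lambda>j. \<sigma> j * \<tau> j)"
proof (rule eq_matI)
  fix i j
  assume "i < dim_row (diag_real_mat n (\<lambda>j. \<sigma> j * \<tau> j))" "j < dim_col (diag_real_mat n (\<lambda>j. \<sigma> j * \<tau> j))"
  then have ij: "i < n" "j < n" by (simp_all add: diag_real_mat_def)
  have "(diag_real_mat n \<sigma> * diag_real_mat n \<tau>) $$ (i,j)
      = (\<Sum>l\<in>{0..<n}. if l = i then (if i = j then complex_of_real (\<sigma> i * \<tau> i) else 0) else 0)"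
    unfolding mult_mat_index_sum[OF diag_real_mat_carrier diag_real_mat_carrier ij]
    using ij by (intro sum.cong) (auto simp: diag_real_mat_def)
  then show "(diag_real_mat n \<sigma> * diag_real_mat n \<tau>) $$ (i,j) = diag_real_mat n (\<lambda>j. \<sigma> j * \<tau> j) $$ (i,j)"
    using ij by (simp add: diag_real_mat_def)
qed (simp_all add: diag_real_mat_def)

lemma hpd_mat_diag_real_mat:
  assumes pos: "\<And>j. j < n \<Longrightarrow> 0 < \<sigma> j"
  shows "hpd_mat n (diag_real_mat n \<sigma>)"
proof -
  have "cadj (diag_real_mat n \<sigma>) = diag_real_mat n \<sigma>"
    by (rule eq_matI) (auto simp: diag_real_mat_def)
  then have herm: "hermitian_mat n (diag_real_mat n \<sigma>)" unfolding hermitian_mat_def by simp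
  have "Im (cinner n x (diag_real_mat n \<sigma> *\<^sub>v x)) = 0 \<and> Re (cinner n x (diag_real_mat n \<sigma> *\<^sub>v x)) > 0"
    if x: "x \<in> carrier_vec n" "x \<noteq> 0\<^sub>v n" for x
  proof -
    obtain i where i: "i < n" "x $ i \<noteq> 0" using x by (metis carrier_vecD eq_vecI index_zero_vec)
    have "cinner n x (diag_real_mat n \<sigma> *\<^sub>v x) = (\<Sum>i<n. complex_of_real (\<sigma> i) * (cnj (x $ i) * x $ i))"
      unfolding cinner_def using x(1)
        by (intro sum.cong) (auto simp: diag_real_mat_mult_vec mult.left_commute)
    also have "\<dots> = complex_of_real (\<Sum>i<n. \<sigma> i * (cmod (x $ i))\<^sup>2)" by (simp add: cnj_mult_self)
    finally show ?thesis using i pos by (auto intro!: sum_pos2[of _ i] simp: less_imp_le)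
  qed
  then show ?thesis using herm unfolding hpd_mat_def cinner_def Let_def by blast
qed

lemma hpd_mat_unitary_conj:
  assumes U: "unitary n U" and B: "hpd_mat n B"
  shows "hpd_mat n (U * B * cadj U)"
proof -
  have Uc: "U \<in> carrier_mat n n" and cU: "cadj U \<in> carrier_mat n n" using U unitary_carrier by auto
  have BH: "hermitian_mat n B" using B hpd_mat_hermitian by blast
  then have Bc: "B \<in> carrier_mat n n" using hermitian_mat_carrier by blast
  have "cadj (U * B * cadj U) = U * B * cadj U"
    using Uc Bc BH unfolding hermitian_mat_def
    by (simp add: cadj_mult[of _ n n _ n] assoc_mult_mat[of _ n n _ n _ n] mult_carrier_mat[of _ n n])
  moreover have UBU: "U * B * cadj U \<in> carrier_mat n n" using Uc Bc cU by (meson mult_carrier_mat)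
  ultimately have herm: "hermitian_mat n (U * B * cadj U)" unfolding hermitian_mat_def by simp
  have "Im (cinner n v ((U * B * cadj U) *\<^sub>v v)) = 0 \<and> Re (cinner n v ((U * B * cadj U) *\<^sub>v v)) > 0"
    if v: "v \<in> carrier_vec n" "v \<noteq> 0\<^sub>v n" for v
  proof -
    define x where "x = cadj U *\<^sub>v v"
    have x: "x \<in> carrier_vec n" unfolding x_def using cU v(1) by simp
    have "U *\<^sub>v x = v"
      unfolding x_def using Uc cU v(1) unitary_mult_cadj[OF U]
      by (simp flip: assoc_mult_mat_vec[of U n n "cadj U" n v])
    then have "x \<noteq> 0\<^sub>v n" using v(2) Uc by auto
    have "(U * B * cadj U) *\<^sub>v v = (U * B) *\<^sub>v x"
      unfolding x_def
      using assoc_mult_mat_vec[of "U * B" n n "cadj U" n v] mult_carrier_mat[OF Uc Bc] cU v(1)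
      by simp
    also have "\<dots> = U *\<^sub>v (B *\<^sub>v x)" using Uc Bc x by simp
    finally have "(U * B * cadj U) *\<^sub>v v = U *\<^sub>v (B *\<^sub>v x)" .
    then have "cinner n v ((U * B * cadj U) *\<^sub>v v) = cinner n x (B *\<^sub>v x)"
      using cinner_mult_mat_vec[OF Uc v(1), of "B *\<^sub>v x"] Bc x unfolding x_def by simp
    then show ?thesis using hpd_mat_cinner[OF B x \<open>x \<noteq> 0\<^sub>v n\<close>] by simp
  qed
  then show ?thesis using herm unfolding hpd_mat_def cinner_def Let_def by blast
qed

lemma hpd_mat_unitary_diagonal:
  assumes A: "hpd_mat n A" and U: "unitary n U" and diag: "diagonal_mat (cadj U * A * U)"
  shows "cadj U * A * U = diag_real_mat n (\<lambda>j. Re ((cadj U * A * U) $$ (j,j)))"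
    and "\<And>j. j < n \<Longrightarrow> 0 < Re ((cadj U * A * U) $$ (j,j))"
proof -
  have Ac: "A \<in> carrier_mat n n" using A hpd_mat_hermitian hermitian_mat_carrier by blast
  have Uc: "U \<in> carrier_mat n n" using U unitary_carrier by blast
  have D: "cadj U * A * U \<in> carrier_mat n n" using Uc Ac by (meson cadj_carrier mult_carrier_mat)
  have entry: "(cadj U * A * U) $$ (j,j) = cinner n (col U j) (A *\<^sub>v col U j)" if "j < n" for j
    by (rule cadj_mult_mult_index[OF Uc Ac that that])
  show "0 < Re ((cadj U * A * U) $$ (j,j))" if "j < n" for j
    using hpd_mat_cinner(2)[OF A _ unitary_col_nonzero[OF U that]] entry[OF that] Uc that by simp
  have "Im ((cadj U * A * U) $$ (j,j)) = 0" if "j < n" for j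
    using hpd_mat_cinner(1)[OF A _ unitary_col_nonzero[OF U that]] entry[OF that] Uc that by simp
  then show "cadj U * A * U = diag_real_mat n (\<lambda>j. Re ((cadj U * A * U) $$ (j,j)))"
    using D diag unfolding diagonal_mat_def
    by (intro eq_matI) (auto simp: diag_real_mat_def complex_eq_iff)
qed

lemma hpd_sqrt_exists:
  assumes A: "hpd_mat n A"
  shows "\<exists>S. hpd_mat n S \<and> S * S = A"
proof -
  have Ac: "A \<in> carrier_mat n n" using A hpd_mat_hermitian hermitian_mat_carrier by blast
  obtain U where U: "unitary n U" and diag: "diagonal_mat (cadj U * A * U)"
    using hermitian_unitary_diagonalizable[OF hpd_mat_hermitian[OF A]] .
  have Uc: "U \<in> carrier_mat n n" and cU: "cadj U \<in> carrier_mat n n" using U unitary_carrier by auto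
  define d where "d j = Re ((cadj U * A * U) $$ (j,j))" for j
  define R where "R = diag_real_mat n (\<lambda>j. sqrt (d j))"
  have d: "cadj U * A * U = diag_real_mat n d" "\<And>j. j < n \<Longrightarrow> 0 < d j"
    using hpd_mat_unitary_diagonal[OF A U diag] unfolding d_def by auto
  then have "hpd_mat n R" unfolding R_def by (intro hpd_mat_diag_real_mat) simp
  moreover have "(U * R * cadj U) * (U * R * cadj U) = A"
  proof -
    have Rc: "R \<in> carrier_mat n n" unfolding R_def by simp
    have "R * R = cadj U * A * U"
      unfolding R_def diag_real_mat_mult d(1) using d(2)
      by (intro eq_matI) (auto simp: diag_real_mat_def abs_of_pos)
    moreover have "(U * R * cadj U) * (U * R * cadj U) = U * R * (cadj U * U) * R * cadj U"
      using Uc cU Rc by (simp add: assoc_mult_mat[of _ n n _ n _ n] mult_carrier_mat[of _ n n])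
    moreover have "\<dots> = U * (R * R) * cadj U"
      using Uc cU Rc U unfolding unitary_def
      by (simp add: assoc_mult_mat[of _ n n _ n _ n] mult_carrier_mat[of _ n n])
    ultimately show ?thesis using unitary_conj_inverse[OF U Ac] by simp
  qed
  ultimately show ?thesis using hpd_mat_unitary_conj[OF U] by blast
qed

lemma cinner_self_diff:
  fixes s a u :: "complex vec"
  assumes "\<forall>i<n. s $ i = a $ i + complex_of_real \<mu> * u $ i"
  shows "cinner n s s - cinner n a a = complex_of_real \<mu> * (cinner n s u + cinner n u a)"
proof -
  have "cnj (s $ i) * s $ i - cnj (a $ i) * a $ i
      = complex_of_real \<mu> * (cnj (s $ i) * u $ i + cnj (u $ i) * a $ i)" if "i < n" for i
    using assms that by (simp add: algebra_simps)
  then have "cinner n s s - cinner n a a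
      = (\<Sum>i<n. complex_of_real \<mu> * (cnj (s $ i) * u $ i + cnj (u $ i) * a $ i))"
    unfolding cinner_def sum_subtractf[symmetric] by (intro sum.cong) auto
  then show ?thesis unfolding cinner_def by (simp add: sum.distrib flip: sum_distrib_left)
qed

lemma unitary_diagonal_eigenvector:
  assumes U: "unitary n U" and D: "D \<in> carrier_mat n n" and diag: "diagonal_mat (cadj U * D * U)"
    and j: "j < n"
  shows "D *\<^sub>v col U j = (cadj U * D * U) $$ (j,j) \<cdot>\<^sub>v col U j"
proof (rule eq_vecI)
  have Uc: "U \<in> carrier_mat n n" and cU: "cadj U \<in> carrier_mat n n" using U unitary_carrier by auto
  define M where "M = cadj U * D * U"
  have Mc: "M \<in> carrier_mat n n" unfolding M_def using cU D Uc by (meson mult_carrier_mat)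
  have "U * M = (U * cadj U) * D * U"
    unfolding M_def using Uc cU D by (simp add: assoc_mult_mat[of _ n n _ n _ n] mult_carrier_mat[of _ n n])
  then have UM: "U * M = D * U" using unitary_mult_cadj[OF U] D by simp
  fix p assume "p < dim_vec (M $$ (j,j) \<cdot>\<^sub>v col U j)"
  then have p: "p < n" using Uc by simp
  have "(D *\<^sub>v col U j) $ p = (U * M) $$ (p,j)" unfolding UM using D Uc p j by simp
  also have "\<dots> = (\<Sum>l\<in>{0..<n}. if l = j then U $$ (p,j) * M $$ (j,j) else 0)"
    unfolding mult_mat_index_sum[OF Uc Mc p j]
    using diag Mc j unfolding M_def[symmetric] diagonal_mat_def by (intro sum.cong) auto
  finally show "(D *\<^sub>v col U j) $ p = (M $$ (j,j) \<cdot>\<^sub>v col U j) $ p" using p j Uc by simp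
qed (use assms unitary_carrier in auto)

text \<open>Write \<open>S u = T u + \<mu> u\<close>. Expanding
  \<open>\<langle>S u, S u\<rangle> = \<langle>u, S\<^sup>2 u\<rangle> = \<langle>u, T\<^sup>2 u\<rangle> = \<langle>T u, T u\<rangle>\<close> gives
  \<open>\<mu> (\<langle>u, S u\<rangle> + \<langle>u, T u\<rangle>) = 0\<close>, and the bracket has positive real part.\<close>

lemma hpd_square_eq_eigenvalue_zero:
  assumes S: "hpd_mat n S" and T: "hpd_mat n T" and ST: "S * S = T * T"
    and u: "u \<in> carrier_vec n" "u \<noteq> 0\<^sub>v n" and eigen: "(S - T) *\<^sub>v u = complex_of_real \<mu> \<cdot>\<^sub>v u"
  shows "\<mu> = 0"
proof -
  have SH: "hermitian_mat n S" and TH: "hermitian_mat n T" using S T hpd_mat_hermitian by auto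
  have Sc: "S \<in> carrier_mat n n" and Tc: "T \<in> carrier_mat n n" using SH TH hermitian_mat_carrier by auto
  have shift: "\<forall>p<n. (S *\<^sub>v u) $ p = (T *\<^sub>v u) $ p + complex_of_real \<mu> * u $ p"
  proof (intro allI impI)
    fix p assume p: "p < n"
    have "((S - T) *\<^sub>v u) $ p = complex_of_real \<mu> * u $ p" using eigen p u(1) by simp
    then show "(S *\<^sub>v u) $ p = (T *\<^sub>v u) $ p + complex_of_real \<mu> * u $ p"
      using Sc Tc u(1) p by (simp add: minus_mult_distrib_mat_vec algebra_simps)
  qed
  have "cinner n (S *\<^sub>v u) (S *\<^sub>v u) = cinner n u ((S * S) *\<^sub>v u)"
    using cinner_hermitian[OF SH u(1), of "S *\<^sub>v u"] Sc u(1) by simp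
  also have "\<dots> = cinner n (T *\<^sub>v u) (T *\<^sub>v u)"
    using cinner_hermitian[OF TH u(1), of "T *\<^sub>v u"] Tc u(1) ST by simp
  finally have "complex_of_real \<mu> * (cinner n (S *\<^sub>v u) u + cinner n u (T *\<^sub>v u)) = 0"
    using cinner_self_diff[OF shift] by simp
  moreover have "cinner n (S *\<^sub>v u) u = cinner n u (S *\<^sub>v u)"
    using cinner_hermitian[OF SH u(1) u(1)] by simp
  moreover have "Re (cinner n u (S *\<^sub>v u) + cinner n u (T *\<^sub>v u)) > 0"
    using hpd_mat_cinner(2)[OF S u] hpd_mat_cinner(2)[OF T u] by simp
  then have "cinner n u (S *\<^sub>v u) + cinner n u (T *\<^sub>v u) \<noteq> 0" by (metis zero_complex.sel(1) less_irrefl)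
  ultimately show ?thesis by simp
qed

lemma hpd_sqrt_unique:
  assumes S: "hpd_mat n S" and T: "hpd_mat n T" and ST: "S * S = T * T"
  shows "S = T"
proof -
  have SH: "hermitian_mat n S" and TH: "hermitian_mat n T" using S T hpd_mat_hermitian by auto
  have Sc: "S \<in> carrier_mat n n" and Tc: "T \<in> carrier_mat n n" using SH TH hermitian_mat_carrier by auto
  define D where "D = S - T"
  have Dc: "D \<in> carrier_mat n n" unfolding D_def using minus_carrier_mat[OF Tc] .
  have DH: "hermitian_mat n D"
    using SH TH Dc cadj_minus[OF Sc Tc] unfolding hermitian_mat_def D_def by simp
  obtain U where U: "unitary n U" and diag: "diagonal_mat (cadj U * D * U)"
    using hermitian_unitary_diagonalizable[OF DH] .
  have Uc: "U \<in> carrier_mat n n" using U unitary_carrier by auto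
  define M where "M = cadj U * D * U"
  have Mc: "M \<in> carrier_mat n n" unfolding M_def using Dc Uc by (meson cadj_carrier mult_carrier_mat)
  have "M $$ (j,j) = 0" if j: "j < n" for j
  proof -
    have "M $$ (j,j) = cnj (M $$ (j,j))"
      using hermitian_mat_index[OF unitary_conj_hermitian[OF U DH] j j] unfolding M_def .
    then have real: "M $$ (j,j) = complex_of_real (Re (M $$ (j,j)))" by (simp add: complex_eq_iff)
    have "D *\<^sub>v col U j = complex_of_real (Re (M $$ (j,j))) \<cdot>\<^sub>v col U j"
      using unitary_diagonal_eigenvector[OF U Dc diag j] real unfolding M_def by simp
    then have "Re (M $$ (j,j)) = 0"
      using hpd_square_eq_eigenvalue_zero[OF S T ST _ unitary_col_nonzero[OF U j]] Uc j unfolding D_def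
        by simp
    then show ?thesis using real by simp
  qed
  then have "M = 0\<^sub>m n n" using diag Mc unfolding M_def[symmetric] diagonal_mat_def by (intro eq_matI) auto
  then have "D = 0\<^sub>m n n" using unitary_conj_inverse[OF U Dc] Uc unfolding M_def by simp
  then have "(S - T) $$ (i,j) = 0" if "i < n" "j < n" for i j using that unfolding D_def by simp
  then have "S $$ (i,j) = T $$ (i,j)" if "i < n" "j < n" for i j using that Sc Tc by fastforce
  then show ?thesis using Sc Tc by (intro eq_matI) auto
qed

lemma hpd_sqrt:
  assumes "hpd_mat n A"
  shows "hpd_mat n (hpd_sqrt n A)" "hpd_sqrt n A * hpd_sqrt n A = A"
proof -
  have "\<exists>!S. hpd_mat n S \<and> S * S = A"
    using hpd_sqrt_exists[OF assms] hpd_sqrt_unique by metis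
  then have "hpd_mat n (hpd_sqrt n A) \<and> hpd_sqrt n A * hpd_sqrt n A = A"
    unfolding hpd_sqrt_def by (rule theI')
  then show "hpd_mat n (hpd_sqrt n A)" "hpd_sqrt n A * hpd_sqrt n A = A" by simp_all
qed

lemma hpd_sqrt_carrier: "hpd_mat n A \<Longrightarrow> hpd_sqrt n A \<in> carrier_mat n n"
  using hpd_sqrt(1) hpd_mat_hermitian hermitian_mat_carrier by blast

lemma unitary_col_entry_bound:
  assumes "unitary n U" "j < n" "p < n"
  shows "cmod (U $$ (p,j)) \<le> 1"
proof -
  have "cinner n (col U j) (col U j) = 1" using cinner_unitary_cols[OF assms(1,2,2)] by simp
  then have "(\<Sum>i<n. (cmod (col U j $ i))\<^sup>2) = 1" unfolding cinner_self by (simp only: of_real_eq_1_iff)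
  moreover have "(cmod (col U j $ p))\<^sup>2 \<le> (\<Sum>i<n. (cmod (col U j $ i))\<^sup>2)"
    by (rule member_le_sum) (use assms in auto)
  ultimately show ?thesis using assms unitary_carrier[OF assms(1)] by (simp add: abs_square_le_1)
qed

lemma det_one_plus_smult_unitary_diagonal:
  assumes U: "unitary m U" and A: "A \<in> carrier_mat m m" and diag: "diagonal_mat (cadj U * A * U)"
  shows "det (1\<^sub>m m + s \<cdot>\<^sub>m A) = (\<Prod>j<m. 1 + s * (cadj U * A * U) $$ (j,j))"
proof -
  have Uc: "U \<in> carrier_mat m m" and cU: "cadj U \<in> carrier_mat m m" using U unitary_carrier by auto
  define L where "L = cadj U * A * U"
  have Lc: "L \<in> carrier_mat m m" unfolding L_def using cU A Uc by (meson mult_carrier_mat)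
  define X where "X = 1\<^sub>m m + s \<cdot>\<^sub>m L"
  have Xc: "X \<in> carrier_mat m m" unfolding X_def using Lc by simp
  have "U * X * cadj U = (U * 1\<^sub>m m + U * (s \<cdot>\<^sub>m L)) * cadj U"
    unfolding X_def using mult_add_distrib_mat[OF Uc one_carrier_mat smult_carrier_mat[OF Lc]] by simp
  also have "\<dots> = U * 1\<^sub>m m * cadj U + U * (s \<cdot>\<^sub>m L) * cadj U"
    using Uc Lc cU by (intro add_mult_distrib_mat[of _ m m]) auto
  also have "U * 1\<^sub>m m * cadj U = 1\<^sub>m m" using Uc unitary_mult_cadj[OF U] by simp
  also have "U * (s \<cdot>\<^sub>m L) * cadj U = s \<cdot>\<^sub>m (U * L * cadj U)"
    using mult_smult_distrib[OF Uc Lc] mult_smult_assoc_mat[OF mult_carrier_mat[OF Uc Lc] cU] by simp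
  also have "U * L * cadj U = A" unfolding L_def by (rule unitary_conj_inverse[OF U A])
  finally have "det (1\<^sub>m m + s \<cdot>\<^sub>m A) = det X" using det_unitary_conj[OF U Xc] by simp
  also have "\<dots> = (\<Prod>j<m. X $$ (j,j))"
    using Xc diag Lc unfolding X_def L_def[symmetric]
      by (intro det_diagonal_mat) (auto simp: diagonal_mat_def)
  also have "\<dots> = (\<Prod>j<m. 1 + s * L $$ (j,j))" using Lc unfolding X_def by (intro prod.cong) auto
  finally show ?thesis unfolding L_def .
qed

lemma unitary_conj_diag_entry_bound:
  assumes U: "unitary m U" and A: "A \<in> carrier_mat m m" and j: "j < m"
  shows "cmod ((cadj U * A * U) $$ (j,j)) \<le> (\<Sum>p<m. \<Sum>q<m. cmod (A $$ (p,q)))"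
proof -
  have Uc: "U \<in> carrier_mat m m" using U unitary_carrier by auto
  have "(cadj U * A * U) $$ (j,j) = (\<Sum>p<m. \<Sum>q<m. cnj (U $$ (p,j)) * A $$ (p,q) * U $$ (q,j))"
    using cadj_mult_mult_index[OF Uc A j j] A Uc j
    by (auto simp: cinner_def scalar_prod_def sum_distrib_left mult.assoc atLeast0LessThan intro!: sum.cong)
  then have "cmod ((cadj U * A * U) $$ (j,j))
      \<le> (\<Sum>p<m. cmod (\<Sum>q<m. cnj (U $$ (p,j)) * A $$ (p,q) * U $$ (q,j)))"
    by (simp add: norm_sum)
  also have "\<dots> \<le> (\<Sum>p<m. \<Sum>q<m. cmod (cnj (U $$ (p,j)) * A $$ (p,q) * U $$ (q,j)))"
    by (intro sum_mono norm_sum)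
  also have "\<dots> \<le> (\<Sum>p<m. \<Sum>q<m. cmod (A $$ (p,q)))"
  proof (intro sum_mono)
    fix p q assume "p \<in> {..<m}" "q \<in> {..<m}"
    then have "cmod (U $$ (p,j)) * cmod (A $$ (p,q)) * cmod (U $$ (q,j)) \<le> 1 * cmod (A $$ (p,q)) * 1"
      using unitary_col_entry_bound[OF U j] by (intro mult_mono) auto
    then show "cmod (cnj (U $$ (p,j)) * A $$ (p,q) * U $$ (q,j)) \<le> cmod (A $$ (p,q))"
      by (simp add: norm_mult)
  qed
  finally show ?thesis .
qed

lemma gram_unitary_conj_diag_entry:
  assumes G: "G \<in> carrier_mat m k" and U: "unitary m U" and j: "j < m"
  shows "(cadj U * (G * cadj G) * U) $$ (j,j) = complex_of_real (\<Sum>i<k. (cmod ((cadj G *\<^sub>v col U j) $ i))\<^sup>2)"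
proof -
  have Uc: "U \<in> carrier_mat m m" using U unitary_carrier by auto
  have cG: "cadj G \<in> carrier_mat k m" and u: "col U j \<in> carrier_vec m" using G Uc j by auto
  have "(cadj U * (G * cadj G) * U) $$ (j,j) = cinner m (col U j) ((G * cadj G) *\<^sub>v col U j)"
    using G cG by (intro cadj_mult_mult_index[OF Uc _ j j]) (meson mult_carrier_mat)
  also have "\<dots> = cinner m (col U j) (G *\<^sub>v (cadj G *\<^sub>v col U j))"
    by (simp only: assoc_mult_mat_vec[OF G cG u])
  also have "\<dots> = cinner k (cadj G *\<^sub>v col U j) (cadj G *\<^sub>v col U j)"
    using cinner_mult_mat_vec[OF G u] cG u by simp
  finally show ?thesis unfolding cinner_self .
qed

lemma det_one_plus_gram:
  assumes G: "G \<in> carrier_mat m k"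
  obtains l :: "nat \<Rightarrow> real" where "\<And>j. j < m \<Longrightarrow> 0 \<le> l j"
    and "\<And>s. det (1\<^sub>m m + complex_of_real s \<cdot>\<^sub>m (G * cadj G)) = complex_of_real (\<Prod>j<m. 1 + s * l j)"
    and "\<And>j. j < m \<Longrightarrow> l j \<le> (\<Sum>p<m. \<Sum>q<m. cmod ((G * cadj G) $$ (p,q)))"
proof -
  define A where "A = G * cadj G"
  have cG: "cadj G \<in> carrier_mat k m" using G by simp
  have Ac: "A \<in> carrier_mat m m" unfolding A_def using G cG by (meson mult_carrier_mat)
  have "hermitian_mat m A" unfolding hermitian_mat_def A_def using Ac cadj_mult[OF G cG] A_def by simp
  then obtain U where U: "unitary m U" and diag: "diagonal_mat (cadj U * A * U)"
    by (rule hermitian_unitary_diagonalizable)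
  define l where "l j = Re ((cadj U * A * U) $$ (j,j))" for j
  have l: "(cadj U * A * U) $$ (j,j) = complex_of_real (l j)" "0 \<le> l j" if "j < m" for j
    using gram_unitary_conj_diag_entry[OF G U that] unfolding l_def A_def by (auto intro: sum_nonneg)
  show thesis
  proof (rule that)
    show "0 \<le> l j" if "j < m" for j using l(2)[OF that] .
    show "det (1\<^sub>m m + complex_of_real s \<cdot>\<^sub>m (G * cadj G)) = complex_of_real (\<Prod>j<m. 1 + s * l j)" for s
      using det_one_plus_smult_unitary_diagonal[OF U Ac diag] l(1) unfolding A_def by simp
    show "l j \<le> (\<Sum>p<m. \<Sum>q<m. cmod ((G * cadj G) $$ (p,q)))" if "j < m" for j
      using unitary_conj_diag_entry_bound[OF U Ac that] l[OF that] unfolding A_def by simp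
  qed
qed

section \<open>The channel matrix as a random matrix\<close>

lemma prob_space_cgauss: "prob_space cgauss"
proof -
  \<comment> \<open>the density is the product of two normal densities with variance 1/2\<close>
  define f where "f t = exp (- t\<^sup>2) / sqrt pi" for t :: real
  have "normal_density 0 (1 / sqrt 2) t = f t" for t
    unfolding normal_density_def f_def by (simp add: power_divide real_sqrt_divide)
  then have "(\<integral>\<^sup>+t. ennreal (f t) \<partial>lborel) = (\<integral>\<^sup>+t. ennreal (normal_density 0 (1 / sqrt 2) t) \<partial>lborel)"
    by simp
  also have "\<dots> = ennreal (\<integral>t. normal_density 0 (1 / sqrt 2) t \<partial>lborel)"
    by (rule nn_integral_eq_integral) auto
  finally have f_int: "(\<integral>\<^sup>+t. ennreal (f t) \<partial>lborel) = 1" by simp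
  have "(\<Prod>b\<in>Basis. ennreal (f (z \<bullet> b))) = ennreal (exp (- (cmod z * cmod z)) / pi)" for z :: complex
  proof -
    have "(\<Prod>b\<in>Basis. ennreal (f (z \<bullet> b))) = ennreal (f (Re z) * f (Im z))"
      by (simp add: Basis_complex_def inner_complex_def f_def ennreal_mult''[symmetric])
    also have "f (Re z) * f (Im z) = exp (- (cmod z * cmod z)) / pi"
      unfolding f_def by (simp add: cmod_def exp_add[symmetric] power2_eq_square algebra_simps)
    finally show ?thesis .
  qed
  then have "emeasure cgauss (space cgauss)
      = (\<integral>\<^sup>+z. (\<Prod>b\<in>Basis. ennreal (f (z \<bullet> b))) \<partial>(lborel :: complex measure))"
    unfolding cgauss_def by (simp add: emeasure_density)
  also have "\<dots> = (\<Prod>b\<in>(Basis :: complex set). \<integral>\<^sup>+t. ennreal (f t) \<partial>lborel)"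
    by (rule nn_integral_lborel_prod) (auto simp: f_def)
  finally show ?thesis using f_int by (intro prob_spaceI) simp
qed

lemma prob_space_H0_space: "prob_space (H0_space nR nT)"
  unfolding H0_space_def by (rule prob_space_PiM) (rule prob_space_cgauss)

lemma borel_measurable_cnj: "(cnj :: complex \<Rightarrow> complex) \<in> borel_measurable borel"
  by (intro borel_measurable_continuous_onI continuous_intros)

definition random_mat :: "'x measure \<Rightarrow> ('x \<Rightarrow> complex mat) \<Rightarrow> nat \<Rightarrow> nat \<Rightarrow> bool" where
  "random_mat M F r c \<longleftrightarrow>
     (\<forall>\<omega>. F \<omega> \<in> carrier_mat r c) \<and> (\<forall>i<r. \<forall>j<c. (\<lambda>\<omega>. F \<omega> $$ (i,j)) \<in> borel_measurable M)"

lemma random_mat_const: "A \<in> carrier_mat r c \<Longrightarrow> random_mat M (\<lambda>_. A) r c"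
  unfolding random_mat_def by simp

lemma random_mat_mult:
  assumes F: "random_mat M F r k" and G: "random_mat M G k c"
  shows "random_mat M (\<lambda>\<omega>. F \<omega> * G \<omega>) r c"
  unfolding random_mat_def
proof (intro conjI allI impI)
  show "F \<omega> * G \<omega> \<in> carrier_mat r c" for \<omega>
    using F G unfolding random_mat_def by (meson mult_carrier_mat)
  fix i j assume ij: "i < r" "j < c"
  have "(\<lambda>\<omega>. (F \<omega> * G \<omega>) $$ (i,j)) = (\<lambda>\<omega>. \<Sum>l\<in>{0..<k}. F \<omega> $$ (i,l) * G \<omega> $$ (l,j))"
    using F G ij unfolding random_mat_def by (intro ext mult_mat_index_sum) auto
  also have "\<dots> \<in> borel_measurable M"
    using F G ij unfolding random_mat_def by (intro borel_measurable_sum borel_measurable_times) auto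
  finally show "(\<lambda>\<omega>. (F \<omega> * G \<omega>) $$ (i,j)) \<in> borel_measurable M" .
qed

lemma random_mat_cadj:
  assumes "random_mat M F r c"
  shows "random_mat M (\<lambda>\<omega>. cadj (F \<omega>)) c r"
  unfolding random_mat_def
proof (intro conjI allI impI)
  show "cadj (F \<omega>) \<in> carrier_mat c r" for \<omega> using assms unfolding random_mat_def by simp
  fix i j assume ij: "i < c" "j < r"
  have "(\<lambda>\<omega>. cadj (F \<omega>) $$ (i,j)) = (\<lambda>\<omega>. cnj (F \<omega> $$ (j,i)))"
    using assms ij unfolding random_mat_def by (intro ext) (metis carrier_matD index_cadj)
  also have "\<dots> \<in> borel_measurable M"
    using assms ij unfolding random_mat_def by (intro measurable_compose[OF _ borel_measurable_cnj]) auto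
  finally show "(\<lambda>\<omega>. cadj (F \<omega>) $$ (i,j)) \<in> borel_measurable M" .
qed

lemma random_mat_one_plus_smult:
  assumes "random_mat M F n n"
  shows "random_mat M (\<lambda>\<omega>. 1\<^sub>m n + a \<cdot>\<^sub>m F \<omega>) n n"
  unfolding random_mat_def
proof (intro conjI allI impI)
  show "1\<^sub>m n + a \<cdot>\<^sub>m F \<omega> \<in> carrier_mat n n" for \<omega> using assms unfolding random_mat_def by simp
  fix i j assume ij: "i < n" "j < n"
  have "dim_row (F \<omega>) = n" "dim_col (F \<omega>) = n" for \<omega> using assms unfolding random_mat_def by auto
  then have "(\<lambda>\<omega>. (1\<^sub>m n + a \<cdot>\<^sub>m F \<omega>) $$ (i,j)) = (\<lambda>\<omega>. (if i = j then 1 else 0) + a * F \<omega> $$ (i,j))"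
    using ij by (intro ext) simp
  also have "\<dots> \<in> borel_measurable M"
    using assms ij unfolding random_mat_def by (intro borel_measurable_add borel_measurable_times) auto
  finally show "(\<lambda>\<omega>. (1\<^sub>m n + a \<cdot>\<^sub>m F \<omega>) $$ (i,j)) \<in> borel_measurable M" .
qed

lemma borel_measurable_det:
  assumes "random_mat M F n n"
  shows "(\<lambda>\<omega>. det (F \<omega>)) \<in> borel_measurable M"
proof -
  have "(\<lambda>\<omega>. det (F \<omega>)) = (\<lambda>\<omega>. \<Sum>p\<in>{p. p permutes {0..<n}}. signof p * (\<Prod>i\<in>{0..<n}. F \<omega> $$ (i, p i)))"
    using assms unfolding random_mat_def by (auto simp: det_def')
  also have "\<dots> \<in> borel_measurable M"
    using assms unfolding random_mat_def
    by (intro borel_measurable_sum borel_measurable_times borel_measurable_const borel_measurable_prod)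
      (auto simp: permutes_in_image)
  finally show ?thesis .
qed

lemma borel_measurable_entry_norm_sum:
  assumes "random_mat M F n n"
  shows "(\<lambda>\<omega>. \<Sum>p<n. \<Sum>q<n. cmod (F \<omega> $$ (p,q))) \<in> borel_measurable M"
  using assms unfolding random_mat_def
  by (intro borel_measurable_sum measurable_compose[OF _ borel_measurable_norm]) auto

lemma random_mat_H0_of: "random_mat (H0_space nR nT) (H0_of nR nT) nR nT"
proof -
  have "(\<lambda>\<omega>. \<omega> (i,j)) \<in> borel_measurable (H0_space nR nT)" if "i < nR" "j < nT" for i j
  proof -
    have "(\<lambda>\<omega>. \<omega> (i,j)) \<in> measurable (H0_space nR nT) cgauss"
      unfolding H0_space_def using that by (intro measurable_component_singleton) auto
    moreover have "sets cgauss = sets borel" unfolding cgauss_def by simp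
    ultimately show ?thesis using measurable_cong_sets by blast
  qed
  then show ?thesis unfolding random_mat_def H0_of_def by simp
qed

lemma random_mat_H_of:
  assumes "hpd_mat nT PhiT" "hpd_mat nR PhiR"
  shows "random_mat (H0_space nR nT) (H_of nT nR PhiT PhiR) nR nT"
  unfolding H_of_def
  by (rule random_mat_mult[OF random_mat_mult[OF random_mat_const[OF hpd_sqrt_carrier[OF assms(2)]]
        random_mat_H0_of] random_mat_const[OF hpd_sqrt_carrier[OF assms(1)]]])

definition gram_mat :: "nat \<Rightarrow> complex mat \<Rightarrow> bool" where
  "gram_mat m A \<longleftrightarrow> (\<exists>k G. G \<in> carrier_mat m k \<and> A = G * cadj G)"

lemma Theta_of_gram_mat:
  assumes "hpd_mat nT PhiT" "hpd_mat nR PhiR"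
  shows "gram_mat (min nT nR) (Theta_of nT nR PhiT PhiR \<omega>)"
proof -
  have H: "H_of nT nR PhiT PhiR \<omega> \<in> carrier_mat nR nT"
    using random_mat_H_of[OF assms] unfolding random_mat_def by simp
  show ?thesis
  proof (cases "nR \<le> nT")
    case True
    then show ?thesis using H unfolding gram_mat_def Theta_of_def Let_def by (auto simp: min_def)
  next
    case False
    then show ?thesis using cadj_carrier[OF H] unfolding gram_mat_def Theta_of_def Let_def
      by (intro exI[of _ nR] exI[of _ "cadj (H_of nT nR PhiT PhiR \<omega>)"]) (auto simp: min_def)
  qed
qed

lemma random_mat_Theta_of:
  assumes "hpd_mat nT PhiT" "hpd_mat nR PhiR"
  shows "random_mat (H0_space nR nT) (Theta_of nT nR PhiT PhiR) (min nT nR) (min nT nR)"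
proof -
  note H = random_mat_H_of[OF assms]
  show ?thesis
  proof (cases "nR \<le> nT")
    case True
    then have "min nT nR = nR" by simp
    with True show ?thesis
      using random_mat_mult[OF H random_mat_cadj[OF H]] unfolding Theta_of_def Let_def by simp
  next
    case False
    then have "min nT nR = nT" by simp
    with False show ?thesis
      using random_mat_mult[OF random_mat_cadj[OF H] H] unfolding Theta_of_def Let_def by simp
  qed
qed

section \<open>Differentiation under the integral sign\<close>

lemma difference_quotient_bound:
  fixes g g' :: "real \<Rightarrow> real"
  assumes deriv: "\<And>x. \<bar>x - b\<bar> < \<delta> \<Longrightarrow> (g has_real_derivative g' x) (at x)"
    and deriv_bound: "\<And>x. \<bar>x - b\<bar> < \<delta> \<Longrightarrow> \<bar>g' x\<bar> \<le> K" and y: "\<bar>y - b\<bar> < \<delta>" "y \<noteq> b"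
  shows "\<bar>(g y - g b) / (y - b)\<bar> \<le> K"
proof -
  have "norm (g y - g b) \<le> K * norm (y - b)"
    using y deriv deriv_bound
    by (intro field_differentiable_bound[of "ball b \<delta>"])
      (auto simp: dist_real_def abs_minus_commute intro: has_field_derivative_at_within)
  then show ?thesis using y(2) by (simp add: divide_le_eq)
qed

context
  fixes M :: "'x measure" and f f' :: "real \<Rightarrow> 'x \<Rightarrow> real" and b \<delta> B K :: real
  assumes M: "finite_measure M" and \<delta>: "\<delta> > 0"
    and meas: "\<And>\<beta>. \<bar>\<beta> - b\<bar> < \<delta> \<Longrightarrow> f \<beta> \<in> borel_measurable M"
    and bound: "\<And>\<beta> \<omega>. \<bar>\<beta> - b\<bar> < \<delta> \<Longrightarrow> \<omega> \<in> space M \<Longrightarrow> \<bar>f \<beta> \<omega>\<bar> \<le> B"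
    and deriv: "\<And>\<beta> \<omega>. \<bar>\<beta> - b\<bar> < \<delta> \<Longrightarrow> \<omega> \<in> space M \<Longrightarrow>
      ((\<lambda>\<beta>. f \<beta> \<omega>) has_real_derivative f' \<beta> \<omega>) (at \<beta>)"
    and deriv_bound: "\<And>\<beta> \<omega>. \<bar>\<beta> - b\<bar> < \<delta> \<Longrightarrow> \<omega> \<in> space M \<Longrightarrow> \<bar>f' \<beta> \<omega>\<bar> \<le> K"
begin

lemma integral_difference_quotient_tendsto:
  assumes y: "y \<longlonglongrightarrow> b" "\<And>n. y n \<noteq> b" "\<And>n. \<bar>y n - b\<bar> < \<delta>"
  shows "(\<lambda>n. ((\<integral>\<omega>. f (y n) \<omega> \<partial>M) - (\<integral>\<omega>. f b \<omega> \<partial>M)) / (y n - b)) \<longlonglongrightarrow> (\<integral>\<omega>. f' b \<omega> \<partial>M)"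
proof -
  define q where "q n \<omega> = (f (y n) \<omega> - f b \<omega>) / (y n - b)" for n \<omega>
  have q_meas: "q n \<in> borel_measurable M" for n
    unfolding q_def using meas[OF y(3)] meas[of b] \<delta>
    by (intro borel_measurable_divide borel_measurable_diff) auto
  have q_lim: "(\<lambda>n. q n \<omega>) \<longlonglongrightarrow> f' b \<omega>" if "\<omega> \<in> space M" for \<omega>
  proof -
    have "((\<lambda>x. (f x \<omega> - f b \<omega>) / (x - b)) \<longlongrightarrow> f' b \<omega>) (at b)"
      using deriv[of b \<omega>] \<delta> that unfolding has_field_derivative_iff by simp
    then show ?thesis
      using y(1,2) unfolding q_def tendsto_at_iff_sequentially comp_def by auto
  qed
  have "\<bar>q n \<omega>\<bar> \<le> K" if "\<omega> \<in> space M" for n \<omega>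
    unfolding q_def using that y(2,3) deriv deriv_bound by (intro difference_quotient_bound) auto
  then have "(\<lambda>n. \<integral>\<omega>. q n \<omega> \<partial>M) \<longlonglongrightarrow> (\<integral>\<omega>. f' b \<omega> \<partial>M)"
    using M q_meas q_lim
    by (intro integral_dominated_convergence[where w="\<lambda>_. K"] borel_measurable_LIMSEQ_real[OF q_lim])
      (auto simp: finite_measure.integrable_const)
  moreover have "(\<integral>\<omega>. q n \<omega> \<partial>M) = ((\<integral>\<omega>. f (y n) \<omega> \<partial>M) - (\<integral>\<omega>. f b \<omega> \<partial>M)) / (y n - b)" for n
  proof -
    have "integrable M (f \<beta>)" if "\<bar>\<beta> - b\<bar> < \<delta>" for \<beta>
      using that meas bound by (intro finite_measure.integrable_const_bound[OF M, where B=B]) auto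
    then show ?thesis unfolding q_def using y(3) \<delta> by simp
  qed
  ultimately show ?thesis by (simp only:)
qed

lemma has_real_derivative_integral:
  "((\<lambda>\<beta>. \<integral>\<omega>. f \<beta> \<omega> \<partial>M) has_real_derivative (\<integral>\<omega>. f' b \<omega> \<partial>M)) (at b)"
  unfolding has_field_derivative_iff tendsto_at_iff_sequentially
proof (intro allI impI)
  fix X :: "nat \<Rightarrow> real" assume X: "\<forall>n. X n \<in> UNIV - {b}" "X \<longlonglongrightarrow> b"
  obtain N where N: "\<And>n. n \<ge> N \<Longrightarrow> \<bar>X n - b\<bar> < \<delta>"
    using X(2) \<delta> unfolding lim_sequentially dist_real_def by blast
  have "(\<lambda>n. ((\<integral>\<omega>. f (X (n + N)) \<omega> \<partial>M) - (\<integral>\<omega>. f b \<omega> \<partial>M)) / (X (n + N) - b))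
      \<longlonglongrightarrow> (\<integral>\<omega>. f' b \<omega> \<partial>M)"
    using LIMSEQ_ignore_initial_segment[OF X(2)] X(1) N by (intro integral_difference_quotient_tendsto) auto
  then show "((\<lambda>x. ((\<integral>\<omega>. f x \<omega> \<partial>M) - (\<integral>\<omega>. f b \<omega> \<partial>M)) / (x - b)) \<circ> X) \<longlonglongrightarrow> (\<integral>\<omega>. f' b \<omega> \<partial>M)"
    unfolding comp_def by (rule LIMSEQ_offset[of _ N])
qed

end

section \<open>Determinant weights and their expectations\<close>

definition eigen_weight :: "nat \<Rightarrow> real \<Rightarrow> real \<Rightarrow> (nat \<Rightarrow> real) \<Rightarrow> real \<Rightarrow> real" where
  "eigen_weight m a c l \<beta> = (\<Prod>j<m. 1 + c * l j / \<beta>) powr (- a)"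

context
  fixes m :: nat and a c :: real and l :: "nat \<Rightarrow> real"
  assumes a: "0 \<le> a" and c: "0 < c" and l: "\<And>j. j < m \<Longrightarrow> 0 \<le> l j"
begin

lemma eigen_weight_eq_exp:
  assumes "\<beta> > 0"
  shows "eigen_weight m a c l \<beta> = exp (- a * (\<Sum>j<m. ln (1 + c * l j / \<beta>)))"
proof -
  have pos: "0 < 1 + c * l j / \<beta>" if "j < m" for j
    using c l[OF that] assms by (simp add: add_pos_nonneg)
  then have "ln (\<Prod>j<m. 1 + c * l j / \<beta>) = (\<Sum>j<m. ln (1 + c * l j / \<beta>))"
    by (intro ln_prod) (auto dest: less_imp_neq[symmetric])
  moreover have "(\<Prod>j<m. 1 + c * l j / \<beta>) > 0" using pos by (intro prod_pos) auto
  ultimately show ?thesis unfolding eigen_weight_def powr_def by simp (use pos in force)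
qed

lemma eigen_weight_pos_le_1:
  assumes "\<beta> > 0"
  shows "0 < eigen_weight m a c l \<beta>" "eigen_weight m a c l \<beta> \<le> 1"
proof -
  have "0 \<le> (\<Sum>j<m. ln (1 + c * l j / \<beta>))"
    using c l assms by (intro sum_nonneg) simp
  then show "0 < eigen_weight m a c l \<beta>" "eigen_weight m a c l \<beta> \<le> 1"
    unfolding eigen_weight_eq_exp[OF assms] using a by (simp_all add: mult_nonneg_nonneg)
qed

lemma eigen_weight_has_derivative:
  assumes \<beta>: "\<beta> > 0"
  shows "(eigen_weight m a c l has_real_derivative
           eigen_weight m a c l \<beta> * (a * (\<Sum>j<m. c * l j / (\<beta> * (\<beta> + c * l j))))) (at \<beta>)"
proof -
  have "((\<lambda>x. ln (x + c * l j) - ln x) has_real_derivative - (c * l j / (\<beta> * (\<beta> + c * l j)))) (at \<beta>)"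
    if "j < m" for j
  proof -
    have "0 < \<beta> + c * l j" using \<beta> c l[OF that] by (simp add: add_pos_nonneg)
    then show ?thesis
      using \<beta> by (auto intro!: derivative_eq_intros simp: field_simps)
  qed
  then have "((\<lambda>x. \<Sum>j<m. ln (x + c * l j) - ln x) has_real_derivative
      (\<Sum>j<m. - (c * l j / (\<beta> * (\<beta> + c * l j))))) (at \<beta>)"
    by (rule DERIV_sum) simp
  from DERIV_cmult[OF this, of "- a"]
  have "((\<lambda>x. - a * (\<Sum>j<m. ln (x + c * l j) - ln x)) has_real_derivative
      a * (\<Sum>j<m. c * l j / (\<beta> * (\<beta> + c * l j)))) (at \<beta>)"
    by (simp add: sum_negf)
  then have D: "((\<lambda>x. exp (- a * (\<Sum>j<m. ln (x + c * l j) - ln x))) has_real_derivative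
      exp (- a * (\<Sum>j<m. ln (\<beta> + c * l j) - ln \<beta>)) * (a * (\<Sum>j<m. c * l j / (\<beta> * (\<beta> + c * l j))))) (at \<beta>)"
    by (rule DERIV_chain2[OF DERIV_exp])
  have eq: "exp (- a * (\<Sum>j<m. ln (x + c * l j) - ln x)) = eigen_weight m a c l x" if "x > 0" for x
  proof -
    have "ln (1 + c * l j / x) = ln (x + c * l j) - ln x" if "j < m" for j
    proof -
      have "1 + c * l j / x = (x + c * l j) / x" using \<open>x > 0\<close> by (simp add: field_simps)
      moreover have "0 < x + c * l j" using \<open>x > 0\<close> c l[OF that] by (simp add: add_pos_nonneg)
      ultimately show ?thesis using \<open>x > 0\<close> by (simp add: ln_divide_pos)
    qed
    then show ?thesis unfolding eigen_weight_eq_exp[OF that] by simp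
  qed
  show ?thesis
    using has_field_derivative_transform_within_open[OF D[unfolded eq[OF \<beta>]], of "{0<..}"] \<beta> eq by auto
qed

lemma eigen_weight_derivative_bounds:
  assumes \<beta>: "\<beta> > 0"
  shows "0 \<le> eigen_weight m a c l \<beta> * (a * (\<Sum>j<m. c * l j / (\<beta> * (\<beta> + c * l j))))"
    and "eigen_weight m a c l \<beta> * (a * (\<Sum>j<m. c * l j / (\<beta> * (\<beta> + c * l j)))) \<le> a * m / \<beta>"
proof -
  have t: "0 \<le> c * l j / (\<beta> * (\<beta> + c * l j))" "c * l j / (\<beta> * (\<beta> + c * l j)) \<le> 1 / \<beta>" if "j < m" for j
  proof -
    have cl: "0 \<le> c * l j" using c l[OF that] by simp
    then show "0 \<le> c * l j / (\<beta> * (\<beta> + c * l j))" using \<beta> by simp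
    have "c * l j / (\<beta> + c * l j) \<le> 1" using cl \<beta> by simp
    then have "1 / \<beta> * (c * l j / (\<beta> + c * l j)) \<le> 1 / \<beta>" using \<beta> by (intro mult_left_le) auto
    then show "c * l j / (\<beta> * (\<beta> + c * l j)) \<le> 1 / \<beta>" by simp
  qed
  have S: "0 \<le> (\<Sum>j<m. c * l j / (\<beta> * (\<beta> + c * l j)))" "(\<Sum>j<m. c * l j / (\<beta> * (\<beta> + c * l j))) \<le> m / \<beta>"
    using sum_mono[of "{..<m}" _ "\<lambda>_. 1 / \<beta>"] t by (auto intro: sum_nonneg)
  note W = eigen_weight_pos_le_1[OF \<beta>]
  show "0 \<le> eigen_weight m a c l \<beta> * (a * (\<Sum>j<m. c * l j / (\<beta> * (\<beta> + c * l j))))"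
    using W S a by simp
  have "eigen_weight m a c l \<beta> * (a * (\<Sum>j<m. c * l j / (\<beta> * (\<beta> + c * l j)))) \<le> 1 * (a * (m / \<beta>))"
    using W S a by (intro mult_mono mult_left_mono) auto
  then show "eigen_weight m a c l \<beta> * (a * (\<Sum>j<m. c * l j / (\<beta> * (\<beta> + c * l j)))) \<le> a * m / \<beta>"
    by simp
qed

lemma eigen_weight_lower_bound:
  assumes \<beta>: "0 < \<beta>" "\<beta> \<le> 1" and L: "0 \<le> L" "\<And>j. j < m \<Longrightarrow> l j \<le> L"
  shows "\<beta> powr (a * m) * (1 + c * L) powr (- (a * m)) \<le> eigen_weight m a c l \<beta>"
proof -
  have "ln (1 + c * l j / \<beta>) \<le> ln (1 + c * L) - ln \<beta>" if "j < m" for j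
  proof -
    have "c * l j \<le> c * L" using c L(2)[OF that] by simp
    then have "(\<beta> + c * l j) / \<beta> \<le> (1 + c * L) / \<beta>" using \<beta> by (intro divide_right_mono) auto
    then have "1 + c * l j / \<beta> \<le> (1 + c * L) / \<beta>" using \<beta> by (simp add: add_divide_distrib)
    moreover have "0 < 1 + c * l j / \<beta>" using c l[OF that] \<beta> by (simp add: add_pos_nonneg)
    ultimately have "ln (1 + c * l j / \<beta>) \<le> ln ((1 + c * L) / \<beta>)" by simp
    also have "\<dots> = ln (1 + c * L) - ln \<beta>"
      using \<beta> c L(1) by (intro ln_divide_pos) (auto simp: add_pos_nonneg)
    finally show ?thesis .
  qed
  then have "(\<Sum>j<m. ln (1 + c * l j / \<beta>)) \<le> m * (ln (1 + c * L) - ln \<beta>)"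
    using sum_mono[of "{..<m}" _ "\<lambda>_. ln (1 + c * L) - ln \<beta>"] by simp
  then have "exp (- a * (m * (ln (1 + c * L) - ln \<beta>))) \<le> eigen_weight m a c l \<beta>"
    unfolding eigen_weight_eq_exp[OF \<beta>(1)] using a by (simp add: mult_left_mono)
  moreover have "exp (- a * (m * (ln (1 + c * L) - ln \<beta>))) = \<beta> powr (a * m) * (1 + c * L) powr (- (a * m))"
    using \<beta> add_pos_nonneg[of 1 "c * L"] c L(1) by (simp add: powr_def exp_add[symmetric] algebra_simps)
  ultimately show ?thesis by simp
qed

end

definition gram_weight :: "nat \<Rightarrow> real \<Rightarrow> real \<Rightarrow> complex mat \<Rightarrow> real \<Rightarrow> real" where
  "gram_weight m a c A \<beta> = Re (det (1\<^sub>m m + complex_of_real (c / \<beta>) \<cdot>\<^sub>m A)) powr (- a)"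

lemma gram_weight_eq_eigen_weight:
  assumes "gram_mat m A"
  obtains l where "\<And>j. j < m \<Longrightarrow> 0 \<le> l j" "\<And>j. j < m \<Longrightarrow> l j \<le> (\<Sum>p<m. \<Sum>q<m. cmod (A $$ (p,q)))"
    and "gram_weight m a c A = eigen_weight m a c l"
proof -
  obtain k G where G: "G \<in> carrier_mat m k" and A: "A = G * cadj G"
    using assms unfolding gram_mat_def by blast
  obtain l where "\<And>j. j < m \<Longrightarrow> 0 \<le> l j"
    and det: "\<And>s. det (1\<^sub>m m + complex_of_real s \<cdot>\<^sub>m (G * cadj G)) = complex_of_real (\<Prod>j<m. 1 + s * l j)"
    and "\<And>j. j < m \<Longrightarrow> l j \<le> (\<Sum>p<m. \<Sum>q<m. cmod ((G * cadj G) $$ (p,q)))"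
    using det_one_plus_gram[OF G] by metis
  moreover have "gram_weight m a c A = eigen_weight m a c l"
    by (rule ext) (simp only: gram_weight_def eigen_weight_def A det Re_complex_of_real times_divide_eq_left)
  ultimately show thesis using that A by blast
qed

lemma integral_pos_prob_space:
  fixes f :: "'x \<Rightarrow> real"
  assumes "prob_space M" "integrable M f" "\<And>\<omega>. \<omega> \<in> space M \<Longrightarrow> 0 < f \<omega>"
  shows "0 < (\<integral>\<omega>. f \<omega> \<partial>M)"
proof -
  have nonneg: "AE \<omega> in M. 0 \<le> f \<omega>" using assms(3) by (intro AE_I2) (simp add: less_imp_le)
  have "(\<integral>\<omega>. f \<omega> \<partial>M) \<noteq> 0"
  proof
    assume "(\<integral>\<omega>. f \<omega> \<partial>M) = 0"
    then have "AE \<omega> in M. f \<omega> = 0" using integral_nonneg_eq_0_iff_AE[OF assms(2) nonneg] by simp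
    moreover have "AE \<omega> in M. 0 < f \<omega>" using assms(3) by (intro AE_I2)
    ultimately have "AE \<omega> in M. False" by eventually_elim simp
    then show False using prob_space.AE_False[OF assms(1)] by simp
  qed
  then show ?thesis using integral_nonneg_AE[OF nonneg] by simp
qed

context
  fixes m :: nat and a c :: real
  assumes a: "0 \<le> a" and c: "0 < c"
begin

lemma gram_weight_pos_le_1:
  assumes "gram_mat m A" "\<beta> > 0"
  shows "0 < gram_weight m a c A \<beta>" "gram_weight m a c A \<beta> \<le> 1"
  using eigen_weight_pos_le_1[where m=m and a=a and c=c and \<beta>=\<beta>, OF a c _ assms(2)]
    gram_weight_eq_eigen_weight[OF assms(1)]
  by metis+

lemma gram_weight_derivative:
  assumes "gram_mat m A" "\<beta> > 0"
  shows "(gram_weight m a c A has_real_derivative deriv (gram_weight m a c A) \<beta>) (at \<beta>)"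
    and "0 \<le> deriv (gram_weight m a c A) \<beta>" "deriv (gram_weight m a c A) \<beta> \<le> a * m / \<beta>"
proof -
  obtain l where l: "\<And>j. j < m \<Longrightarrow> 0 \<le> l j" and eq: "gram_weight m a c A = eigen_weight m a c l"
    using gram_weight_eq_eigen_weight[OF assms(1)] by metis
  note D = eigen_weight_has_derivative[where m=m and a=a and c=c and l=l, OF a c l assms(2)]
  then show "(gram_weight m a c A has_real_derivative deriv (gram_weight m a c A) \<beta>) (at \<beta>)"
    unfolding eq by (simp add: DERIV_imp_deriv)
  show "0 \<le> deriv (gram_weight m a c A) \<beta>" "deriv (gram_weight m a c A) \<beta> \<le> a * m / \<beta>"
    using eigen_weight_derivative_bounds[where m=m and a=a and c=c and l=l, OF a c l assms(2)]
      DERIV_imp_deriv[OF D]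
    unfolding eq by simp_all
qed

lemma gram_weight_lower_bound:
  assumes "gram_mat m A" "0 < \<beta>" "\<beta> \<le> 1"
  shows "\<beta> powr (a * m) * (1 + c * (\<Sum>p<m. \<Sum>q<m. cmod (A $$ (p,q)))) powr (- (a * m))
    \<le> gram_weight m a c A \<beta>"
proof -
  obtain l where "\<And>j. j < m \<Longrightarrow> 0 \<le> l j" "\<And>j. j < m \<Longrightarrow> l j \<le> (\<Sum>p<m. \<Sum>q<m. cmod (A $$ (p,q)))"
    and "gram_weight m a c A = eigen_weight m a c l"
    using gram_weight_eq_eigen_weight[OF assms(1)] by metis
  then show ?thesis
    using eigen_weight_lower_bound[where m=m and a=a and c=c and l=l, OF a c _ assms(2,3)]
      by (simp add: sum_nonneg)
qed

end

context
  fixes M :: "'x measure" and \<Theta> :: "'x \<Rightarrow> complex mat" and m :: nat and a c :: real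
  assumes M: "prob_space M" and \<Theta>_random: "random_mat M \<Theta> m m" and \<Theta>_gram: "\<And>\<omega>. gram_mat m (\<Theta> \<omega>)"
    and a: "0 \<le> a" and c: "0 < c"
begin

lemma gram_weight_measurable: "(\<lambda>\<omega>. gram_weight m a c (\<Theta> \<omega>) \<beta>) \<in> borel_measurable M"
proof -
  have "(\<lambda>\<omega>. det (1\<^sub>m m + complex_of_real (c / \<beta>) \<cdot>\<^sub>m \<Theta> \<omega>)) \<in> borel_measurable M"
    by (rule borel_measurable_det[OF random_mat_one_plus_smult[OF \<Theta>_random]])
  moreover have "(\<lambda>z::complex. Re z powr (- a)) \<in> borel_measurable borel" by measurable
  ultimately show ?thesis unfolding gram_weight_def by (rule measurable_compose)
qed

lemma integrable_gram_weight:
  assumes "\<beta> > 0" shows "integrable M (\<lambda>\<omega>. gram_weight m a c (\<Theta> \<omega>) \<beta>)"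
  using gram_weight_pos_le_1[OF a c \<Theta>_gram assms] gram_weight_measurable
  by (intro finite_measure.integrable_const_bound[OF prob_space.finite_measure[OF M], where B=1])
    (auto intro!: AE_I2 simp: abs_of_pos)

lemma expected_gram_weight_pos:
  assumes "\<beta> > 0" shows "0 < (\<integral>\<omega>. gram_weight m a c (\<Theta> \<omega>) \<beta> \<partial>M)"
  using gram_weight_pos_le_1[OF a c \<Theta>_gram assms]
  by (intro integral_pos_prob_space[OF M integrable_gram_weight[OF assms]])

lemma expected_gram_weight_has_derivative:
  assumes b: "b > 0"
  shows "((\<lambda>\<beta>. \<integral>\<omega>. gram_weight m a c (\<Theta> \<omega>) \<beta> \<partial>M) has_real_derivative
           (\<integral>\<omega>. deriv (gram_weight m a c (\<Theta> \<omega>)) b \<partial>M)) (at b)"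
proof (rule has_real_derivative_integral[where \<delta>="b / 2" and B=1 and K="a * m / (b / 2)"])
  fix \<beta> assume \<beta>: "\<bar>\<beta> - b\<bar> < b / 2"
  then have \<beta>0: "\<beta> > 0" and \<beta>b: "b / 2 < \<beta>" by (auto simp: abs_if split: if_splits)
  show "(\<lambda>\<omega>. gram_weight m a c (\<Theta> \<omega>) \<beta>) \<in> borel_measurable M" by (rule gram_weight_measurable)
  fix \<omega>
  show "\<bar>gram_weight m a c (\<Theta> \<omega>) \<beta>\<bar> \<le> 1"
    using gram_weight_pos_le_1[OF a c \<Theta>_gram \<beta>0] by (simp add: abs_of_pos)
  note D = gram_weight_derivative[OF a c \<Theta>_gram \<beta>0, of \<omega>]
  show "((\<lambda>\<beta>. gram_weight m a c (\<Theta> \<omega>) \<beta>) has_real_derivative deriv (gram_weight m a c (\<Theta> \<omega>)) \<beta>) (at \<beta>)"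
    using D(1) by simp
  have "a * m / \<beta> \<le> a * m / (b / 2)" using \<beta>b b a by (intro divide_left_mono) auto
  then show "\<bar>deriv (gram_weight m a c (\<Theta> \<omega>)) \<beta>\<bar> \<le> a * m / (b / 2)" using D(2,3) by simp
qed (use M b prob_space.finite_measure in auto)

lemma expected_deriv_gram_weight_nonneg:
  assumes "b > 0" shows "0 \<le> (\<integral>\<omega>. deriv (gram_weight m a c (\<Theta> \<omega>)) b \<partial>M)"
  using gram_weight_derivative(2)[OF a c \<Theta>_gram assms] by (simp add: integral_nonneg)

lemma expected_gram_weight_lower_bound:
  obtains K where "K > 0"
    and "\<And>\<beta>. 0 < \<beta> \<Longrightarrow> \<beta> \<le> 1 \<Longrightarrow> \<beta> powr (a * m) * K \<le> (\<integral>\<omega>. gram_weight m a c (\<Theta> \<omega>) \<beta> \<partial>M)"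
proof -
  define w where "w \<omega> = (1 + c * (\<Sum>p<m. \<Sum>q<m. cmod (\<Theta> \<omega> $$ (p,q)))) powr (- (a * m))" for \<omega>
  have w: "0 < w \<omega>" "w \<omega> \<le> 1" for \<omega>
  proof -
    have "1 \<le> 1 + c * (\<Sum>p<m. \<Sum>q<m. cmod (\<Theta> \<omega> $$ (p,q)))" using c by (simp add: sum_nonneg)
    then show "0 < w \<omega>" "w \<omega> \<le> 1" unfolding w_def using a
      by (auto simp: powr_minus_divide ge_one_powr_ge_zero)
  qed
  have w_int: "integrable M w"
    using w borel_measurable_entry_norm_sum[OF \<Theta>_random] unfolding w_def
    by (intro finite_measure.integrable_const_bound[OF prob_space.finite_measure[OF M], where B=1]) auto
  show thesis
  proof (rule that)
    show "0 < (\<integral>\<omega>. w \<omega> \<partial>M)" using integral_pos_prob_space[OF M w_int] w by simp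
    fix \<beta> :: real assume \<beta>: "0 < \<beta>" "\<beta> \<le> 1"
    have "\<beta> powr (a * m) * (\<integral>\<omega>. w \<omega> \<partial>M) = (\<integral>\<omega>. \<beta> powr (a * m) * w \<omega> \<partial>M)" by simp
    also have "\<dots> \<le> (\<integral>\<omega>. gram_weight m a c (\<Theta> \<omega>) \<beta> \<partial>M)"
      using w_int integrable_gram_weight[OF \<beta>(1)] gram_weight_lower_bound[OF a c \<Theta>_gram \<beta>]
      unfolding w_def by (intro integral_mono) auto
    finally show "\<beta> powr (a * m) * (\<integral>\<omega>. w \<omega> \<partial>M) \<le> (\<integral>\<omega>. gram_weight m a c (\<Theta> \<omega>) \<beta> \<partial>M)" .
  qed
qed

end

section \<open>Maximising the exponent over \<open>\<beta>\<close>\<close>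

lemma continuous_on_Ioc_attains_max:
  fixes E :: "real \<Rightarrow> real"
  assumes b: "0 < b" and cont: "continuous_on {0<..b} E" and lim: "filterlim E at_bot (at_right 0)"
  obtains x where "x \<in> {0<..b}" "\<And>y. y \<in> {0<..b} \<Longrightarrow> E y \<le> E x"
proof -
  have "eventually (\<lambda>y. E y < E b) (at_right 0)" using lim by (simp add: filterlim_at_bot_dense)
  then obtain \<epsilon> where \<epsilon>: "\<epsilon> > 0" "\<And>y. 0 < y \<Longrightarrow> y < \<epsilon> \<Longrightarrow> E y < E b"
    unfolding eventually_at_right_field by auto
  define e where "e = min \<epsilon> b"
  have "continuous_on {e..b} E" using \<epsilon>(1) b by (intro continuous_on_subset[OF cont]) (auto simp: e_def)
  moreover have "{e..b} \<noteq> {}" by (simp add: e_def)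
  ultimately obtain x where x: "x \<in> {e..b}" "\<And>y. y \<in> {e..b} \<Longrightarrow> E y \<le> E x"
    using continuous_attains_sup[OF compact_Icc] by blast
  show thesis
  proof (rule that)
    show "x \<in> {0<..b}" using x(1) \<epsilon>(1) b by (auto simp: e_def)
    fix y assume y: "y \<in> {0<..b}"
    show "E y \<le> E x"
    proof (cases "y < e")
      case True
      then have "E y < E b" using \<epsilon>(2) y by (simp add: e_def)
      also have "E b \<le> E x" using x(2) \<epsilon>(1) b by (simp add: e_def)
      finally show ?thesis by simp
    qed (use x(2) y in auto)
  qed
qed

lemma deriv_zero_at_max_Ioc:
  fixes E :: "real \<Rightarrow> real"
  assumes x: "x \<in> {0<..b}" and max: "\<And>y. y \<in> {0<..b} \<Longrightarrow> E y \<le> E x"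
    and D: "(E has_real_derivative D) (at x)" and right_end: "x = b \<Longrightarrow> D \<le> 0"
  shows "D = 0"
proof (cases "x < b")
  case True
  show ?thesis
  proof (rule DERIV_local_max[OF D, of "min x (b - x)"])
    show "0 < min x (b - x)" using x True by simp
    show "\<forall>y. \<bar>x - y\<bar> < min x (b - x) \<longrightarrow> E y \<le> E x"
      using max by (auto simp: abs_less_iff)
  qed
next
  case False
  then have "x = b" using x by simp
  have "\<not> D < 0"
  proof
    assume "D < 0"
    then obtain d where d: "d > 0" "\<And>h. 0 < h \<Longrightarrow> h < d \<Longrightarrow> E x < E (x - h)"
      using DERIV_neg_dec_left[OF D] by blast
    define h where "h = min d x / 2"
    have "0 < h" "h < d" "h < x" using d x unfolding h_def by auto
    then have "E x < E (x - h)" using d by simp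
    moreover have "E (x - h) \<le> E x" using max \<open>0 < h\<close> \<open>h < x\<close> x by simp
    ultimately show False by simp
  qed
  then show ?thesis using right_end[OF \<open>x = b\<close>] by simp
qed

context
  fixes F F' :: "real \<Rightarrow> real" and n u \<kappa> p K :: real
  assumes n: "0 < n" and u: "0 < u" and \<kappa>: "0 < \<kappa>" and p: "\<kappa> * p < n * u" and K: "0 < K"
    and F_pos: "\<And>\<beta>. 0 < \<beta> \<Longrightarrow> 0 < F \<beta>"
    and F_deriv: "\<And>\<beta>. 0 < \<beta> \<Longrightarrow> (F has_real_derivative F' \<beta>) (at \<beta>)"
    and F'_nonneg: "\<And>\<beta>. 0 < \<beta> \<Longrightarrow> 0 \<le> F' \<beta>"
    and F_lower: "\<And>\<beta>. 0 < \<beta> \<Longrightarrow> \<beta> \<le> 1 \<Longrightarrow> \<beta> powr p * K \<le> F \<beta>"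
begin

lemma exponent_has_derivative:
  assumes \<beta>: "0 < \<beta>"
  shows "((\<lambda>\<beta>. u * (n - \<beta>) + n * u * ln (\<beta> / n) - \<kappa> * ln (F \<beta>)) has_real_derivative
           - u + n * u / \<beta> - \<kappa> * F' \<beta> / F \<beta>) (at \<beta>)"
  using \<beta> n F_pos[OF \<beta>] by (auto intro!: derivative_eq_intros F_deriv[OF \<beta>] simp: field_simps)

lemma exponent_tendsto_at_bot:
  "filterlim (\<lambda>\<beta>. u * (n - \<beta>) + n * u * ln (\<beta> / n) - \<kappa> * ln (F \<beta>)) at_bot (at_right 0)"
proof -
  define C where "C = u * n - n * u * ln n - \<kappa> * ln K"
  have "u * (n - \<beta>) + n * u * ln (\<beta> / n) - \<kappa> * ln (F \<beta>) \<le> C + (n * u - \<kappa> * p) * ln \<beta>"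
    if \<beta>: "0 < \<beta>" "\<beta> \<le> 1" for \<beta>
  proof -
    have "p * ln \<beta> + ln K \<le> ln (F \<beta>)"
      using F_lower[OF \<beta>] F_pos[OF \<beta>(1)] \<beta>(1) K by (simp add: ln_mult ln_powr flip: ln_le_cancel_iff)
    then have "\<kappa> * (p * ln \<beta> + ln K) \<le> \<kappa> * ln (F \<beta>)" using \<kappa> by simp
    moreover have "0 < \<beta> * u" using \<beta> u by simp
    ultimately show ?thesis using \<beta> n unfolding C_def by (simp add: ln_div algebra_simps)
  qed
  then have "\<forall>\<^sub>F \<beta> in at_right 0.
      u * (n - \<beta>) + n * u * ln (\<beta> / n) - \<kappa> * ln (F \<beta>) \<le> C + (n * u - \<kappa> * p) * ln \<beta>"
    unfolding eventually_at_right_field by (intro exI[of _ 1]) auto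
  moreover have "filterlim (\<lambda>\<beta>. (n * u - \<kappa> * p) * ln \<beta>) at_bot (at_right 0)"
    by (rule filterlim_tendsto_pos_mult_at_bot[OF tendsto_const _ ln_at_0]) (use p in simp)
  then have "filterlim (\<lambda>\<beta>. C + (n * u - \<kappa> * p) * ln \<beta>) at_bot (at_right 0)"
    by (subst filterlim_tendsto_add_at_bot_iff[OF tendsto_const])
  ultimately show ?thesis
    unfolding filterlim_at_bot by (auto elim: eventually_elim2 intro: order_trans)
qed

lemma exponent_max_critical:
  fixes E :: "real \<Rightarrow> real"
  defines "E \<equiv> \<lambda>\<beta>. u * (n - \<beta>) + n * u * ln (\<beta> / n) - \<kappa> * ln (F \<beta>)"
  shows "(\<exists>b\<in>{0<..n}. \<forall>\<beta>\<in>{0<..n}. E \<beta> \<le> E b)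
    \<and> (\<forall>b\<in>{0<..n}. (\<forall>\<beta>\<in>{0<..n}. E \<beta> \<le> E b) \<longrightarrow> (E has_real_derivative 0) (at b))"
proof
  have D: "(E has_real_derivative - u + n * u / \<beta> - \<kappa> * F' \<beta> / F \<beta>) (at \<beta>)" if "0 < \<beta>" for \<beta>
    unfolding E_def by (rule exponent_has_derivative[OF that])
  have "continuous_on {0<..n} E" by (intro continuous_at_imp_continuous_on ballI DERIV_isCont[OF D]) auto
  then show "\<exists>b\<in>{0<..n}. \<forall>\<beta>\<in>{0<..n}. E \<beta> \<le> E b"
    using continuous_on_Ioc_attains_max[OF n _ exponent_tendsto_at_bot] unfolding E_def by metis
  show "\<forall>b\<in>{0<..n}. (\<forall>\<beta>\<in>{0<..n}. E \<beta> \<le> E b) \<longrightarrow> (E has_real_derivative 0) (at b)"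
  proof (intro ballI impI)
    fix b assume b: "b \<in> {0<..n}" and max: "\<forall>\<beta>\<in>{0<..n}. E \<beta> \<le> E b"
    have "- u + n * u / b - \<kappa> * F' b / F b = 0"
    proof (rule deriv_zero_at_max_Ioc[OF b _ D])
      show "- u + n * u / b - \<kappa> * F' b / F b \<le> 0" if "b = n"
        using that n \<kappa> F_pos[OF n] F'_nonneg[OF n] by simp
    qed (use max b in auto)
    then show "(E has_real_derivative 0) (at b)" using D[of b] b by simp
  qed
qed

end

lemma E0t_eq_exponent:
  "E0t nT nR PhiT PhiR \<gamma> Nc \<rho> = (\<lambda>\<beta>. (1 + \<rho>) * (real nT - \<beta>) + real nT * (1 + \<rho>) * ln (\<beta> / real nT)
     - 1 / real Nc * ln (\<integral>\<omega>. gram_weight (min nT nR) (Nc * \<rho>) (\<gamma> / (1 + \<rho>)) (Theta_of nT nR PhiT PhiR \<omega>) \<beta>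
                         \<partial>H0_space nR nT))"
  by (rule ext) (simp add: E0t_def gram_weight_def mult.commute)

lemma E0t_max_critical:
  fixes nT nR Nc :: nat and PhiT PhiR :: "complex mat" and \<gamma> \<rho> :: real
  assumes nT: "nT > 0" and PhiT: "hpd_mat nT PhiT" and PhiR: "hpd_mat nR PhiR"
    and \<gamma>: "\<gamma> > 0" and Nc: "Nc > 0" and \<rho>: "0 \<le> \<rho>"
  shows "(\<exists>b \<in> {0<..real nT}. \<forall>\<beta> \<in> {0<..real nT}.
           E0t nT nR PhiT PhiR \<gamma> Nc \<rho> \<beta> \<le> E0t nT nR PhiT PhiR \<gamma> Nc \<rho> b) \<and>
         (\<forall>b \<in> {0<..real nT}.
           (\<forall>\<beta> \<in> {0<..real nT}. E0t nT nR PhiT PhiR \<gamma> Nc \<rho> \<beta> \<le> E0t nT nR PhiT PhiR \<gamma> Nc \<rho> b)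
           \<longrightarrow> ((E0t nT nR PhiT PhiR \<gamma> Nc \<rho>) has_real_derivative 0) (at b))"
proof -
  define m where "m = min nT nR"
  define a where "a = real Nc * \<rho>"
  define \<Theta> where "\<Theta> = Theta_of nT nR PhiT PhiR"
  define F where "F \<beta> = (\<integral>\<omega>. gram_weight m a (\<gamma> / (1 + \<rho>)) (\<Theta> \<omega>) \<beta> \<partial>H0_space nR nT)" for \<beta>
  define F' where "F' \<beta> = (\<integral>\<omega>. deriv (gram_weight m a (\<gamma> / (1 + \<rho>)) (\<Theta> \<omega>)) \<beta> \<partial>H0_space nR nT)" for \<beta>
  have "0 \<le> a" "0 < \<gamma> / (1 + \<rho>)" using \<rho> \<gamma> by (simp_all add: a_def)
  note expected = prob_space_H0_space random_mat_Theta_of[OF PhiT PhiR, folded m_def \<Theta>_def]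
    Theta_of_gram_mat[OF PhiT PhiR, folded m_def \<Theta>_def] this
  obtain K where "0 < K" "\<And>\<beta>. 0 < \<beta> \<Longrightarrow> \<beta> \<le> 1 \<Longrightarrow> \<beta> powr (a * m) * K \<le> F \<beta>"
    using expected_gram_weight_lower_bound[OF expected] unfolding F_def by metis
  moreover have "1 / real Nc * (a * m) < real nT * (1 + \<rho>)"
    using \<rho> nT Nc mult_left_mono[of m nT \<rho>] by (simp add: a_def m_def algebra_simps)
  moreover note expected_gram_weight_pos[OF expected, folded F_def]
    expected_gram_weight_has_derivative[OF expected, folded F_def F'_def]
    expected_deriv_gram_weight_nonneg[OF expected, folded F'_def]
  moreover have E: "E0t nT nR PhiT PhiR \<gamma> Nc \<rho>
      = (\<lambda>\<beta>. (1 + \<rho>) * (real nT - \<beta>) + real nT * (1 + \<rho>) * ln (\<beta> / real nT) - 1 / real Nc * ln (F \<beta>))"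
    unfolding E0t_eq_exponent F_def a_def m_def \<Theta>_def ..
  ultimately show ?thesis
    unfolding E using \<rho> nT Nc by (intro exponent_max_critical[where F=F and F'=F']) auto
qed

theorem proposition2:
  fixes nT nR Nc :: nat and PhiT PhiR :: "complex mat" and \<gamma> :: real
  assumes "nT > 0" and "nR > 0"
    and "hpd_mat nT PhiT" and "hpd_mat nR PhiR"
    and "\<gamma> > 0" and "Nc > 0"
  shows "\<forall>\<rho> \<in> {0..1}.
     (\<exists>b \<in> {0<..real nT}. \<forall>\<beta> \<in> {0<..real nT}.
         E0t nT nR PhiT PhiR \<gamma> Nc \<rho> \<beta> \<le> E0t nT nR PhiT PhiR \<gamma> Nc \<rho> b) \<and>
     (\<forall>b \<in> {0<..real nT}.
        (\<forall>\<beta> \<in> {0<..real nT}. E0t nT nR PhiT PhiR \<gamma> Nc \<rho> \<beta> \<le> E0t nT nR PhiT PhiR \<gamma> Nc \<rho> b)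
        \<longrightarrow> ((E0t nT nR PhiT PhiR \<gamma> Nc \<rho>) has_real_derivative 0) (at b))"
  using E0t_max_critical[OF assms(1,3-6)] by simp

end
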